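(* Let $X,Y$ be compact metric spaces with metrics $d,d'$, and let $f\colon X\to X$, $g\colon Y\to Y$ be continuous maps. Let $C\in\mathcal{C}(f)$, $D\in\mathcal{D}(C)$, $C'\in\mathcal{C}(g)$, and let $h\colon C\to C'$ be a homeomorphism with $h\circ f|_C=g|_{C'}\circ h$ (then $h(D)\in\mathcal{D}(C')$). Let $\mathcal{F},\mathcal{G}$ be full Furstenberg families, $n\ge2$ and $\delta>0$. If $g$ has the s-limit shadowing property and $V^s(D)$ is dense $(\mathcal{F},\mathcal{G})$-$n$-$\delta$-chaotic for $f$, then there is $\delta'>0$ such that $V^s(h(D))$ is dense $(\mathcal{F},\mathcal{G})$-$n$-$\delta'$-chaotic for $g$.
   Context: The following is defined for any continuous self-map $f$ of a compact metric space $(X,d)$ (and analogously for $g$ on $(Y,d')$). A $\delta$-chain of $f$ ($\delta>0$) is a finite sequence $(x_i)_{i=0}^k$, $k\ge1$, with $d(f(x_i),x_{i+1})\le\delta$ for $0\le i\le k-1$; it is a $\delta$-cycle if $x_0=x_k$, with length $k$. Write $x\to y$ if for every $\delta>0$ there is a $\delta$-chain from $x$ to $y$. Let $CR(f)=\{x\colon x\to x\}$; on $CR(f)$ let $x\leftrightarrow y$ iff $x\to y$ and $y\to x$; its classes are the chain components, forming $\mathcal{C}(f)$. For $C\in\mathcal{C}(f)$, $\delta>0$, let $m=m(C,\delta)$ be the gcd of the lengths of all $\delta$-cycles of $f|_C$, and for $x,y\in C$ let $x\sim_{C,\delta}y$ iff there is a $\delta$-chain of $f|_C$ from $x$ to $y$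 of length divisible by $m$; $\mathcal{D}(C,\delta)$ is the set of its equivalence classes. Let $x\sim_C y$ iff $x\sim_{C,\delta}y$ for all $\delta>0$; $\mathcal{D}(C)$ is its set of classes. For $D\in\mathcal{D}(C)$, $D_\delta$ is the element of $\mathcal{D}(C,\delta)$ containing $D$. $W^s(C)=\{x\colon\lim_i d(f^i(x),C)=0\}$ and $V^s(D)=\bigcap_{\delta>0}\{x\in W^s(C)\colon\lim_i d(f^i(x),f^i(D_\delta))=0\}$. $g$ has the s-limit shadowing property if for every $\epsilon>0$ there is $\delta>0$ such that for every sequence $(y_i)_{i\ge0}$ with $d'(g(y_i),y_{i+1})\le\delta$ for all $i$ and $d'(g(y_i),y_{i+1})\to0$ there is $y\in Y$ with $d'(g^i(y),y_i)\le\epsilon$ for all $i$ and $d'(g^i(y),y_i)\to0$. A Furstenberg family is a nonempty proper family $\mathcal{F}\subsetneq 2^{\mathbb{N}_0}$ closed under taking supersets; it is full if $\{i\in A\colon i\ge n\}\in\mathcal{F}$ for all $A\in\mathcal{F}$, $n\ge0$. For $x_1,\dots,x_n\in X$, $r>0$: $S_f(x_1,\dots,x_n;r)=\{i\in\mathbb{N}_0\colon\min_{j<k}d(f^i(x_j),f^i(x_k))>r\}$ and $T_f(x_1,\dots,x_n;r)=\{i\in\mathbb{N}_0\colon\max_{j<k}d(f^i(x_j),f^i(x_k))<r\}$. $(x_1,\dots,x_n)$ is $(\mathcal{F},\mathcal{G})$-$\delta$-scrambled for $f$ if $S_f(x_1,\dots,x_n;\delta)\in\mathcal{F}$ and $T_f(x_1,\dots,x_n;\epsilon)\in\mathcal{G}$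 for all $\epsilon>0$. A nonempty $Z\subset X$ is dense $(\mathcal{F},\mathcal{G})$-$n$-$\delta$-chaotic for $f$ if the set of $(\mathcal{F},\mathcal{G})$-$\delta$-scrambled $n$-tuples in $Z^n$ is dense in $Z^n$ (analogously for $g$). *)

theory Defs
  imports "HOL-Analysis.Analysis"
begin

definition delta_chain :: "('a::metric_space \<Rightarrow> 'a) \<Rightarrow> real \<Rightarrow> (nat \<Rightarrow> 'a) \<Rightarrow> nat \<Rightarrow> bool" where
  "delta_chain f \<delta> c k \<longleftrightarrow> k \<ge> 1 \<and> (\<forall>i<k. dist (f (c i)) (c (Suc i)) \<le> \<delta>)"

definition chain_to :: "('a::metric_space \<Rightarrow> 'a) \<Rightarrow> 'a \<Rightarrow> 'a \<Rightarrow> bool" where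
  "chain_to f x y \<longleftrightarrow> (\<forall>\<delta>>0. \<exists>c k. delta_chain f \<delta> c k \<and> c 0 = x \<and> c k = y)"

definition chain_recurrent :: "('a::metric_space \<Rightarrow> 'a) \<Rightarrow> 'a set" where
  "chain_recurrent f = {x. chain_to f x x}"

definition chain_components :: "('a::metric_space \<Rightarrow> 'a) \<Rightarrow> 'a set set" where
  "chain_components f =
     {{y \<in> chain_recurrent f. chain_to f x y \<and> chain_to f y x} | x. x \<in> chain_recurrent f}"

definition delta_chain_on :: "('a::metric_space \<Rightarrow> 'a) \<Rightarrow> 'a set \<Rightarrow> real \<Rightarrow> (nat \<Rightarrow> 'a) \<Rightarrow> nat \<Rightarrow> bool" where
  "delta_chain_on f C \<delta> c k \<longleftrightarrow> delta_chain f \<delta> c k \<and> (\<forall>i\<le>k. c i \<in> C)"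

definition cycle_gcd :: "('a::metric_space \<Rightarrow> 'a) \<Rightarrow> 'a set \<Rightarrow> real \<Rightarrow> nat" where
  "cycle_gcd f C \<delta> = Gcd {k. \<exists>c. delta_chain_on f C \<delta> c k \<and> c 0 = c k}"

definition cyc_rel :: "('a::metric_space \<Rightarrow> 'a) \<Rightarrow> 'a set \<Rightarrow> real \<Rightarrow> 'a \<Rightarrow> 'a \<Rightarrow> bool" where
  "cyc_rel f C \<delta> x y \<longleftrightarrow> x \<in> C \<and> y \<in> C \<and>
     (\<exists>c k. delta_chain_on f C \<delta> c k \<and> c 0 = x \<and> c k = y \<and> cycle_gcd f C \<delta> dvd k)"

definition cyc_classes :: "('a::metric_space \<Rightarrow> 'a) \<Rightarrow> 'a set \<Rightarrow> real \<Rightarrow> 'a set set" where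
  "cyc_classes f C \<delta> = {{y. cyc_rel f C \<delta> x y} | x. x \<in> C}"

definition cyc_rel_lim :: "('a::metric_space \<Rightarrow> 'a) \<Rightarrow> 'a set \<Rightarrow> 'a \<Rightarrow> 'a \<Rightarrow> bool" where
  "cyc_rel_lim f C x y \<longleftrightarrow> (\<forall>\<delta>>0. cyc_rel f C \<delta> x y)"

definition cyc_classes_lim :: "('a::metric_space \<Rightarrow> 'a) \<Rightarrow> 'a set \<Rightarrow> 'a set set" where
  "cyc_classes_lim f C = {{y. cyc_rel_lim f C x y} | x. x \<in> C}"

definition class_at :: "('a::metric_space \<Rightarrow> 'a) \<Rightarrow> 'a set \<Rightarrow> 'a set \<Rightarrow> real \<Rightarrow> 'a set" where
  "class_at f C D \<delta> = (THE E. E \<in> cyc_classes f C \<delta> \<and> D \<subseteq> E)"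

definition stable_set :: "('a::metric_space \<Rightarrow> 'a) \<Rightarrow> 'a set \<Rightarrow> 'a set" where
  "stable_set f C = {x. (\<lambda>i. infdist ((f ^^ i) x) C) \<longlonglongrightarrow> 0}"

definition stable_set_class :: "('a::metric_space \<Rightarrow> 'a) \<Rightarrow> 'a set \<Rightarrow> 'a set \<Rightarrow> 'a set" where
  "stable_set_class f C D = (\<Inter>\<delta>\<in>{\<delta>. \<delta> > 0}.
     {x \<in> stable_set f C. (\<lambda>i. infdist ((f ^^ i) x) ((f ^^ i) ` class_at f C D \<delta>)) \<longlonglongrightarrow> 0})"

definition s_limit_shadowing :: "('a::metric_space \<Rightarrow> 'a) \<Rightarrow> bool" where
  "s_limit_shadowing g \<longleftrightarrow> (\<forall>\<epsilon>>0. \<exists>\<delta>>0. \<forall>y::nat \<Rightarrow> 'a.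
     (\<forall>i. dist (g (y i)) (y (Suc i)) \<le> \<delta>) \<and> (\<lambda>i. dist (g (y i)) (y (Suc i))) \<longlonglongrightarrow> 0 \<longrightarrow>
     (\<exists>z. (\<forall>i. dist ((g ^^ i) z) (y i) \<le> \<epsilon>) \<and> (\<lambda>i. dist ((g ^^ i) z) (y i)) \<longlonglongrightarrow> 0))"

definition furstenberg_family :: "nat set set \<Rightarrow> bool" where
  "furstenberg_family \<F> \<longleftrightarrow> \<F> \<noteq> {} \<and> \<F> \<noteq> UNIV \<and> (\<forall>A B. A \<in> \<F> \<and> A \<subseteq> B \<longrightarrow> B \<in> \<F>)"

definition full_family :: "nat set set \<Rightarrow> bool" where
  "full_family \<F> \<longleftrightarrow> furstenberg_family \<F> \<and> (\<forall>A\<in>\<F>. \<forall>n. {i \<in> A. i \<ge> n} \<in> \<F>)"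

text \<open>Tuples (x_0, ..., x_{n-1}) are represented as functions nat => 'a (values at j >= n are ignored).
  S_f: the minimum over pairs j<k of the distances exceeds r; T_f: the maximum is below r.\<close>
definition S_set :: "('a::metric_space \<Rightarrow> 'a) \<Rightarrow> nat \<Rightarrow> (nat \<Rightarrow> 'a) \<Rightarrow> real \<Rightarrow> nat set" where
  "S_set f n x r = {i. \<forall>j k. j < k \<and> k < n \<longrightarrow> dist ((f ^^ i) (x j)) ((f ^^ i) (x k)) > r}"

definition T_set :: "('a::metric_space \<Rightarrow> 'a) \<Rightarrow> nat \<Rightarrow> (nat \<Rightarrow> 'a) \<Rightarrow> real \<Rightarrow> nat set" where
  "T_set f n x r = {i. \<forall>j k. j < k \<and> k < n \<longrightarrow> dist ((f ^^ i) (x j)) ((f ^^ i) (x k)) < r}"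

definition scrambled :: "nat set set \<Rightarrow> nat set set \<Rightarrow> ('a::metric_space \<Rightarrow> 'a) \<Rightarrow> nat \<Rightarrow> real \<Rightarrow> (nat \<Rightarrow> 'a) \<Rightarrow> bool" where
  "scrambled \<F> \<G> f n \<delta> x \<longleftrightarrow> S_set f n x \<delta> \<in> \<F> \<and> (\<forall>\<epsilon>>0. T_set f n x \<epsilon> \<in> \<G>)"

definition dense_chaotic :: "nat set set \<Rightarrow> nat set set \<Rightarrow> ('a::metric_space \<Rightarrow> 'a) \<Rightarrow> nat \<Rightarrow> real \<Rightarrow> 'a set \<Rightarrow> bool" where
  "dense_chaotic \<F> \<G> f n \<delta> Z \<longleftrightarrow> Z \<noteq> {} \<and>
     (\<forall>z. (\<forall>j<n. z j \<in> Z) \<longrightarrow> (\<forall>\<epsilon>>0. \<exists>x. (\<forall>j<n. x j \<in> Z) \<and> scrambled \<F> \<G> f n \<delta> x \<and>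
        (\<forall>j<n. dist (x j) (z j) < \<epsilon>)))"

end

(*
  A point x of V^s(D) stays asymptotically close to a sequence c in C, and h o c is an asymptotic
  pseudo-orbit of g in C' that follows the cyclic classes of h(D) at every scale.  Given w in
  V^s(h(D)), follow the orbit of w until it is close to a class, cross C' by a chain of exactly
  the right length (chains inside a chain component exist for all large lengths in the residue
  class modulo the cycle gcd), and continue with h o c.  s-limit shadowing turns this pseudo-orbit
  into an orbit starting near w and asymptotic to h o c, hence to h applied to the orbit of x.
  Doing this for each coordinate of an (F,G)-scrambled tuple of f gives a tuple for g that is
  (F,G)-scrambled for the separation delta' = eta/2, where eta is a modulus of uniform continuity
  of the inverse of h for delta/2.
*)
theory Submission
  imports Defs "HOL-Number_Theory.Cong"
begin

section \<open>Chains of prescribed length\<close>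

definition chain_of_length :: "('a::metric_space \<Rightarrow> 'a) \<Rightarrow> 'a set \<Rightarrow> real \<Rightarrow> nat \<Rightarrow> 'a \<Rightarrow> 'a \<Rightarrow> bool" where
  "chain_of_length f C \<delta> k x y \<longleftrightarrow> (\<exists>c. delta_chain_on f C \<delta> c k \<and> c 0 = x \<and> c k = y)"

lemma chain_to_iff_chain_of_length: "chain_to f x y \<longleftrightarrow> (\<forall>\<delta>>0. \<exists>k. chain_of_length f UNIV \<delta> k x y)"
  unfolding chain_to_def chain_of_length_def delta_chain_on_def by auto (meson+)

lemma chain_of_length_pos: "chain_of_length f C \<delta> k x y \<Longrightarrow> 1 \<le> k"
  by (auto simp: chain_of_length_def delta_chain_on_def delta_chain_def)

lemma chain_of_length_mem:
  assumes "chain_of_length f C \<delta> k x y" shows "x \<in> C" "y \<in> C"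
  using assms by (auto simp: chain_of_length_def delta_chain_on_def)

lemma delta_chain_mono:
  assumes "delta_chain f \<delta> c k" "\<delta> \<le> \<delta>'" shows "delta_chain f \<delta>' c k"
  unfolding delta_chain_def
proof (intro conjI allI impI)
  show "1 \<le> k" using assms(1) by (simp add: delta_chain_def)
  fix i assume "i < k"
  then have "dist (f (c i)) (c (Suc i)) \<le> \<delta>" using assms(1) by (simp add: delta_chain_def)
  then show "dist (f (c i)) (c (Suc i)) \<le> \<delta>'" using assms(2) by linarith
qed

lemma chain_of_length_mono:
  "chain_of_length f C \<delta> k x y \<Longrightarrow> C \<subseteq> C' \<Longrightarrow> \<delta> \<le> \<delta>' \<Longrightarrow> chain_of_length f C' \<delta>' k x y"
  unfolding chain_of_length_def delta_chain_on_def using delta_chain_mono by blast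

lemma chain_of_length_trans:
  assumes "chain_of_length f C \<delta> k x y" "chain_of_length f C \<delta> l y z"
  shows "chain_of_length f C \<delta> (k + l) x z"
proof -
  obtain c d where c: "delta_chain_on f C \<delta> c k" "c 0 = x" "c k = y"
    and d: "delta_chain_on f C \<delta> d l" "d 0 = y" "d l = z"
    using assms by (auto simp: chain_of_length_def)
  define e where "e i = (if i \<le> k then c i else d (i - k))" for i
  have step: "dist (f (e i)) (e (Suc i)) \<le> \<delta>" if "i < k + l" for i
  proof (cases "i < k")
    case True
    then show ?thesis using c by (auto simp: e_def delta_chain_on_def delta_chain_def)
  next
    case False
    then have "e i = d (i - k)" "e (Suc i) = d (Suc (i - k))" "i - k < l"
      using that c(3) d(2) by (auto simp: e_def Suc_diff_le)
    then show ?thesis using d(1) by (simp add: delta_chain_on_def delta_chain_def)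
  qed
  have "e i \<in> C" if "i \<le> k + l" for i
    using c(1) d(1) that by (auto simp: e_def delta_chain_on_def)
  moreover have "1 \<le> k + l" using c(1) by (simp add: delta_chain_on_def delta_chain_def)
  moreover have "e 0 = x" "e (k + l) = z" using c d
    by (auto simp: e_def delta_chain_on_def delta_chain_def)
  ultimately show ?thesis using step
    unfolding chain_of_length_def delta_chain_on_def delta_chain_def by blast
qed

lemma chain_of_length_orbit:
  assumes "1 \<le> k" "0 \<le> \<delta>" "\<forall>i\<le>k. (f ^^ i) x \<in> C"
  shows "chain_of_length f C \<delta> k x ((f ^^ k) x)"
  unfolding chain_of_length_def delta_chain_on_def delta_chain_def
  using assms by (intro exI[of _ "\<lambda>i. (f ^^ i) x"]) auto

text \<open>Index 0 enters the chain condition only through its image under f.\<close>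
lemma delta_chain_perturb:
  assumes "delta_chain f \<epsilon> c k"
    and "\<forall>i\<in>{1..k}. dist (c i) (c' i) \<le> \<eta>" and "\<forall>i<k. dist (f (c' i)) (f (c i)) \<le> \<rho>"
  shows "delta_chain f (\<rho> + \<epsilon> + \<eta>) c' k"
  unfolding delta_chain_def
proof (intro conjI allI impI)
  show "1 \<le> k" using assms(1) by (simp add: delta_chain_def)
  fix i assume i: "i < k"
  have "dist (f (c' i)) (c' (Suc i)) \<le> dist (f (c' i)) (f (c i)) + dist (f (c i)) (c (Suc i)) + dist (c (Suc i)) (c' (Suc i))"
    by (meson dist_triangle add_right_mono order_trans)
  also have "\<dots> \<le> \<rho> + \<epsilon> + \<eta>"
    using assms i by (intro add_mono) (auto simp: delta_chain_def)
  finally show "dist (f (c' i)) (c' (Suc i)) \<le> \<rho> + \<epsilon> + \<eta>" .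
qed

lemma chain_of_length_move_end:
  assumes "chain_of_length f C \<delta> k x y" "y' \<in> C" "dist y y' \<le> \<eta>"
  shows "chain_of_length f C (\<delta> + \<eta>) k x y'"
proof -
  obtain c where c: "delta_chain_on f C \<delta> c k" "c 0 = x" "c k = y"
    using assms(1) by (auto simp: chain_of_length_def)
  have k: "1 \<le> k" using c(1) by (simp add: delta_chain_on_def delta_chain_def)
  have "0 \<le> \<eta>" using assms(3) zero_le_dist order_trans by blast
  then have "delta_chain f (0 + \<delta> + \<eta>) (c(k := y')) k"
    using c assms(3) k by (intro delta_chain_perturb) (auto simp: delta_chain_on_def)
  then show ?thesis using c assms(2) k
    unfolding chain_of_length_def delta_chain_on_def by (intro exI[of _ "c(k := y')"]) auto
qed

lemma chain_of_length_move_start: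
  assumes "chain_of_length f C \<delta> k x y" "x' \<in> C" "dist (f x') (f x) \<le> \<rho>"
  shows "chain_of_length f C (\<rho> + \<delta>) k x' y"
proof -
  obtain c where c: "delta_chain_on f C \<delta> c k" "c 0 = x" "c k = y"
    using assms(1) by (auto simp: chain_of_length_def)
  have k: "1 \<le> k" using c(1) by (simp add: delta_chain_on_def delta_chain_def)
  have "0 \<le> \<rho>" using assms(3) zero_le_dist order_trans by blast
  then have "delta_chain f (\<rho> + \<delta> + 0) (c(0 := x')) k"
    using c assms(3) k by (intro delta_chain_perturb) (auto simp: delta_chain_on_def)
  then show ?thesis using c assms(2) k
    unfolding chain_of_length_def delta_chain_on_def by (intro exI[of _ "c(0 := x')"]) auto
qed

lemma delta_chain_split:
  assumes "delta_chain f \<delta> c k" "0 < i" "i < k"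
  shows "chain_of_length f UNIV \<delta> i (c 0) (c i)" "chain_of_length f UNIV \<delta> (k - i) (c i) (c k)"
proof -
  show "chain_of_length f UNIV \<delta> i (c 0) (c i)"
    using assms unfolding chain_of_length_def delta_chain_on_def delta_chain_def
    by (intro exI[of _ c]) auto
  show "chain_of_length f UNIV \<delta> (k - i) (c i) (c k)"
    using assms unfolding chain_of_length_def delta_chain_on_def delta_chain_def
    by (intro exI[of _ "\<lambda>j. c (i + j)"]) auto
qed

section \<open>Chain components\<close>

lemma chain_to_trans: "chain_to f x y \<Longrightarrow> chain_to f y z \<Longrightarrow> chain_to f x z"
  unfolding chain_to_iff_chain_of_length by (meson chain_of_length_trans)

lemma chain_components_iff:
  assumes "C \<in> chain_components f" "x \<in> C"
  shows "y \<in> C \<longleftrightarrow> chain_to f x y \<and> chain_to f y x"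
proof -
  obtain x0 where "C = {y \<in> chain_recurrent f. chain_to f x0 y \<and> chain_to f y x0}"
    using assms(1) by (auto simp: chain_components_def)
  then have "C = {y. chain_to f x0 y \<and> chain_to f y x0}"
    by (auto simp: chain_recurrent_def intro: chain_to_trans)
  then show ?thesis using assms(2) chain_to_trans by blast
qed

lemma chain_components_nonempty: "C \<in> chain_components f \<Longrightarrow> C \<noteq> {}"
  by (auto simp: chain_components_def chain_recurrent_def)

lemma chain_to_through_limit:
  assumes "isCont f l"
    and "\<forall>e>0. \<exists>z i j. dist z l < e \<and> chain_of_length f UNIV e i x z \<and> chain_of_length f UNIV e j z y"
  shows "chain_to f x l" "chain_to f l y"
proof -
  have "(\<exists>i. chain_of_length f UNIV \<delta> i x l) \<and> (\<exists>j. chain_of_length f UNIV \<delta> j l y)" if "\<delta> > 0" for \<delta>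
  proof -
    obtain r where r: "r > 0" "\<forall>z. dist z l < r \<longrightarrow> dist (f z) (f l) < \<delta>/2"
      using assms(1) \<open>\<delta> > 0\<close> unfolding continuous_at_eps_delta by (meson half_gt_zero)
    define e where "e = min r (\<delta>/2)"
    have "e > 0" using r \<open>\<delta> > 0\<close> by (simp add: e_def)
    then obtain z i j where z: "dist z l < e" "chain_of_length f UNIV e i x z" "chain_of_length f UNIV e j z y"
      using assms(2) by blast
    have "chain_of_length f UNIV (e + e) i x l"
      using z by (intro chain_of_length_move_end) auto
    moreover have "chain_of_length f UNIV (\<delta>/2 + e) j l y"
      using z r by (intro chain_of_length_move_start) (auto simp: e_def dist_commute less_imp_le)
    moreover have "e + e \<le> \<delta>" "\<delta>/2 + e \<le> \<delta>" by (auto simp: e_def min_def)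
    ultimately show ?thesis by (meson chain_of_length_mono order_refl)
  qed
  then show "chain_to f x l" "chain_to f l y"
    unfolding chain_to_iff_chain_of_length by blast+
qed

lemma chain_component_closed:
  assumes "C \<in> chain_components f" "continuous_on UNIV f"
  shows "closed C"
proof -
  obtain x0 where x0: "x0 \<in> C" using chain_components_nonempty[OF assms(1)] by blast
  have "l \<in> C" if "l \<in> closure C" for l
  proof -
    have "\<exists>z i j. dist z l < e \<and> chain_of_length f UNIV e i x0 z \<and> chain_of_length f UNIV e j z x0"
      if "e > 0" for e
    proof -
      obtain z where "z \<in> C" "dist z l < e" using \<open>l \<in> closure C\<close> \<open>e > 0\<close> closure_approachable by blast
      then show ?thesis
        using chain_components_iff[OF assms(1) x0] \<open>e > 0\<close> unfolding chain_to_iff_chain_of_length by blast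
    qed
    moreover have "isCont f l" using assms(2) by (simp add: continuous_on_eq_continuous_at)
    ultimately have "chain_to f x0 l" "chain_to f l x0"
      using chain_to_through_limit by blast+
    then show ?thesis using chain_components_iff[OF assms(1) x0] by blast
  qed
  then show ?thesis using closure_subset_eq by blast
qed

lemma chain_component_invariant:
  assumes "C \<in> chain_components f" "continuous_on UNIV f" "x \<in> C"
  shows "f x \<in> C"
proof -
  have "chain_of_length f UNIV \<delta> 1 x (f x)" if "\<delta> > 0" for \<delta>
    using chain_of_length_orbit[of 1 \<delta> f x UNIV] that by simp
  then have "chain_to f x (f x)"
    unfolding chain_to_iff_chain_of_length by blast
  moreover have "\<exists>z i j. dist z (f x) < e \<and> chain_of_length f UNIV e i x z \<and> chain_of_length f UNIV e j z x"
    if "e > 0" for e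
  proof -
    obtain k where "chain_of_length f UNIV (e/2) k x x"
      using chain_components_iff[OF assms(1,3)] assms(3) \<open>e > 0\<close>
      unfolding chain_to_iff_chain_of_length by (meson half_gt_zero)
    then have k: "chain_of_length f UNIV (e/2) (k + k) x x" "1 \<le> k"
      using chain_of_length_trans chain_of_length_pos by blast+
    then obtain c where c: "delta_chain f (e/2) c (k + k)" "c 0 = x" "c (k + k) = x"
      by (auto simp: chain_of_length_def delta_chain_on_def)
    have "chain_of_length f UNIV (e/2) 1 x (c 1)" "chain_of_length f UNIV (e/2) (k + k - 1) (c 1) x"
      using delta_chain_split[OF c(1), of 1] c k(2) by auto
    moreover have "dist (c 1) (f x) < e"
      using c k(2) \<open>e > 0\<close> by (auto simp: delta_chain_def dist_commute)
    moreover have "e/2 \<le> e" using \<open>e > 0\<close> by simp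
    ultimately show ?thesis by (meson chain_of_length_mono order_refl)
  qed
  moreover have "isCont f (f x)" using assms(2) by (simp add: continuous_on_eq_continuous_at)
  ultimately show ?thesis using chain_components_iff[OF assms(1,3)] chain_to_through_limit(2) by blast
qed

lemma infdist_lessE:
  assumes "A \<noteq> {}" "infdist x A < e"
  obtains a where "a \<in> A" "dist x a < e"
  using assms by (auto simp: infdist_notempty cINF_less_iff)

lemma delta_chain_into_set:
  assumes "delta_chain f \<epsilon> c k" "c 0 \<in> C" "c k \<in> C" "\<forall>i\<le>k. infdist (c i) C < \<eta>" "C \<noteq> {}"
    and "\<forall>a b. dist a b < \<eta> \<longrightarrow> dist (f a) (f b) \<le> \<rho>"
  shows "chain_of_length f C (\<rho> + \<epsilon> + \<eta>) k (c 0) (c k)"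
proof -
  have "infdist (c 0) C < \<eta>" using assms(4) by simp
  then have "0 < \<eta>" using infdist_nonneg[of "c 0" C] by linarith
  have "\<exists>z. i \<le> k \<longrightarrow> z \<in> C \<and> dist (c i) z < \<eta> \<and> (c i \<in> C \<longrightarrow> z = c i)" for i
  proof (cases "i \<le> k \<and> c i \<notin> C")
    case True
    then obtain z where "z \<in> C" "dist (c i) z < \<eta>"
      using infdist_lessE[OF assms(5)] assms(4) by metis
    then show ?thesis using True by auto
  next
    case False
    then show ?thesis using \<open>0 < \<eta>\<close> by (intro exI[of _ "c i"]) auto
  qed
  then obtain c' where c': "\<And>i. i \<le> k \<Longrightarrow> c' i \<in> C \<and> dist (c i) (c' i) < \<eta> \<and> (c i \<in> C \<longrightarrow> c' i = c i)"
    by metis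
  have "\<forall>i\<in>{1..k}. dist (c i) (c' i) \<le> \<eta>" using c' by (meson atLeastAtMost_iff less_imp_le)
  moreover have "\<forall>i<k. dist (f (c' i)) (f (c i)) \<le> \<rho>"
  proof (intro allI impI)
    fix i assume "i < k"
    then have "dist (c' i) (c i) < \<eta>" using c'[of i] by (simp add: dist_commute)
    then show "dist (f (c' i)) (f (c i)) \<le> \<rho>" using assms(6) by blast
  qed
  ultimately have "delta_chain f (\<rho> + \<epsilon> + \<eta>) c' k" by (rule delta_chain_perturb[OF assms(1)])
  moreover have "c' 0 = c 0" "c' k = c k" using c' assms(2,3) by auto
  ultimately show ?thesis
    using c' unfolding chain_of_length_def delta_chain_on_def by (intro exI[of _ c']) auto
qed

locale chain_component =
  fixes f :: "'a::metric_space \<Rightarrow> 'a" and C :: "'a set"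
  assumes compact_space: "compact (UNIV :: 'a set)"
    and continuous: "continuous_on UNIV f"
    and component: "C \<in> chain_components f"
begin

lemma isCont_at: "isCont f x"
  using continuous by (simp add: continuous_on_eq_continuous_at)

lemma uniformly_continuous: "uniformly_continuous_on UNIV f"
  using compact_uniformly_continuous[OF continuous compact_space] .

lemma compact_component: "compact C"
  using compact_Int_closed[OF compact_space chain_component_closed[OF component continuous]] by simp

lemma component_nonempty: "C \<noteq> {}"
  using chain_components_nonempty[OF component] .

lemma map_in_component: "x \<in> C \<Longrightarrow> f x \<in> C"
  using chain_component_invariant[OF component continuous] .

lemma funpow_in_component: "x \<in> C \<Longrightarrow> (f ^^ i) x \<in> C"
  by (induction i) (auto simp: map_in_component)

lemma chain_to_in_component: "x \<in> C \<Longrightarrow> y \<in> C \<Longrightarrow> chain_to f x y"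
  using chain_components_iff[OF component] by blast

text \<open>The points at distance at least \<eta> from C form a compact set, and none of them lies on
  arbitrarily fine chains from x to y, as it would then belong to C.\<close>
lemma chain_points_near_component:
  assumes "x \<in> C" "y \<in> C" "\<eta> > 0"
  obtains \<epsilon> where "\<epsilon> > 0"
    "\<forall>z i j. chain_of_length f UNIV \<epsilon> i x z \<and> chain_of_length f UNIV \<epsilon> j z y \<longrightarrow> infdist z C < \<eta>"
proof -
  define K where "K = {z. \<eta> \<le> infdist z C}"
  have "compact K"
    unfolding K_def using compact_Int_closed[OF compact_space closed_Collect_le[of "\<lambda>_. \<eta>"]]
    by (simp add: continuous_on_infdist continuous_on_id)
  have "\<exists>e>0. \<not> (\<exists>z i j. dist z l < e \<and> chain_of_length f UNIV e i x z \<and> chain_of_length f UNIV e j z y)"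
    if "l \<in> K" for l
  proof (rule ccontr)
    assume "\<not> ?thesis"
    then have "chain_to f x l" "chain_to f l y"
      using chain_to_through_limit[OF isCont_at] by blast+
    then have "l \<in> C" using chain_components_iff[OF component assms(1)] chain_to_in_component[OF assms(2,1)] chain_to_trans
      by blast
    then show False using that \<open>\<eta> > 0\<close> by (simp add: K_def)
  qed
  then obtain e where e: "\<And>l. l \<in> K \<Longrightarrow> e l > 0 \<and>
      \<not> (\<exists>z i j. dist z l < e l \<and> chain_of_length f UNIV (e l) i x z \<and> chain_of_length f UNIV (e l) j z y)"
    by metis
  have "K \<subseteq> (\<Union>l\<in>K. ball l (e l))" using e by force
  then obtain F where F: "F \<subseteq> K" "finite F" "K \<subseteq> (\<Union>l\<in>F. ball l (e l))"
    using compactE_image[OF \<open>compact K\<close>, of K "\<lambda>l. ball l (e l)"] by (metis open_ball)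
  define \<epsilon> where "\<epsilon> = Min (insert 1 (e ` F))"
  have "\<forall>l\<in>F. e l > 0" using F(1) e by blast
  then have "\<epsilon> > 0" using F(2) by (simp add: \<epsilon>_def)
  moreover have "infdist z C < \<eta>"
    if "chain_of_length f UNIV \<epsilon> i x z" "chain_of_length f UNIV \<epsilon> j z y" for z i j
  proof (rule ccontr)
    assume "\<not> infdist z C < \<eta>"
    then obtain l where "l \<in> F" "dist z l < e l" using F by (force simp: K_def dist_commute)
    moreover have "\<epsilon> \<le> e l" using \<open>l \<in> F\<close> F(2) by (simp add: \<epsilon>_def)
    ultimately show False using e[of l] F(1) that by (meson chain_of_length_mono order_refl subsetD)
  qed
  ultimately show ?thesis using that by blast
qed

text \<open>A fine chain from x to y stays close to C, and uniform continuity of f lets us move its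
  points into C at a small cost in the step size.\<close>
lemma chain_of_length_within:
  assumes "x \<in> C" "y \<in> C" "\<delta> > 0"
  obtains k where "chain_of_length f C \<delta> k x y"
proof -
  obtain \<eta>0 where \<eta>0: "\<eta>0 > 0" "\<forall>a b. dist a b < \<eta>0 \<longrightarrow> dist (f a) (f b) < \<delta>/3"
    using uniformly_continuous \<open>\<delta> > 0\<close> unfolding uniformly_continuous_on_def
    by (metis UNIV_I divide_pos_pos zero_less_numeral)
  define \<eta> where "\<eta> = min \<eta>0 (\<delta>/3)"
  have "\<eta> > 0" using \<eta>0 \<open>\<delta> > 0\<close> by (simp add: \<eta>_def)
  then obtain \<epsilon> where \<epsilon>: "\<epsilon> > 0"
    "\<forall>z i j. chain_of_length f UNIV \<epsilon> i x z \<and> chain_of_length f UNIV \<epsilon> j z y \<longrightarrow> infdist z C < \<eta>"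
    using chain_points_near_component[OF assms(1,2)] by blast
  define \<epsilon>' where "\<epsilon>' = min \<epsilon> (\<delta>/3)"
  have "\<epsilon>' > 0" using \<epsilon> \<open>\<delta> > 0\<close> by (simp add: \<epsilon>'_def)
  then obtain c k where c: "delta_chain f \<epsilon>' c k" "c 0 = x" "c k = y"
    using chain_to_in_component[OF assms(1,2)] unfolding chain_to_def by blast
  have "\<forall>i\<le>k. infdist (c i) C < \<eta>"
  proof (intro allI impI)
    fix i assume "i \<le> k"
    show "infdist (c i) C < \<eta>"
    proof (cases "0 < i \<and> i < k")
      case True
      have "\<epsilon>' \<le> \<epsilon>" by (simp add: \<epsilon>'_def)
      then have "chain_of_length f UNIV \<epsilon> i x (c i)" "chain_of_length f UNIV \<epsilon> (k - i) (c i) y"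
        using delta_chain_split[OF c(1)] True c(2,3) by (metis chain_of_length_mono order_refl)+
      then show ?thesis using \<epsilon>(2) by blast
    next
      case False
      then have "c i \<in> C" using \<open>i \<le> k\<close> c assms by (cases "i = 0") auto
      then show ?thesis using \<open>\<eta> > 0\<close> by simp
    qed
  qed
  moreover have "\<forall>a b. dist a b < \<eta> \<longrightarrow> dist (f a) (f b) \<le> \<delta>/3"
  proof (intro allI impI)
    fix a b :: 'a assume "dist a b < \<eta>"
    then have "dist a b < \<eta>0" by (simp add: \<eta>_def)
    then show "dist (f a) (f b) \<le> \<delta>/3" using \<eta>0(2) less_imp_le by blast
  qed
  ultimately have "chain_of_length f C (\<delta>/3 + \<epsilon>' + \<eta>) k x y"
    using delta_chain_into_set[OF c(1), where C=C] c(2,3) assms(1,2) component_nonempty by blast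
  moreover have "\<delta>/3 + \<epsilon>' + \<eta> \<le> \<delta>" by (simp add: \<epsilon>'_def \<eta>_def)
  ultimately show ?thesis using that chain_of_length_mono by blast
qed

end

section \<open>Asymptotic sequences\<close>

definition asymptotic :: "(nat \<Rightarrow> 'a::metric_space) \<Rightarrow> (nat \<Rightarrow> 'a) \<Rightarrow> bool" where
  "asymptotic u v \<longleftrightarrow> (\<lambda>i. dist (u i) (v i)) \<longlonglongrightarrow> 0"

lemma tendsto_zero_le:
  fixes X Y :: "nat \<Rightarrow> real"
  assumes "\<And>i. 0 \<le> X i" "\<And>i. X i \<le> Y i" "Y \<longlonglongrightarrow> 0"
  shows "X \<longlonglongrightarrow> 0"
  using assms by (intro tendsto_sandwich[of "\<lambda>_. 0" X sequentially Y]) auto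

lemma asymptotic_sym: "asymptotic u v \<Longrightarrow> asymptotic v u"
  by (simp add: asymptotic_def dist_commute)

lemma asymptotic_trans:
  assumes "asymptotic u v" "asymptotic v w" shows "asymptotic u w"
proof -
  have "(\<lambda>i. dist (u i) (v i) + dist (v i) (w i)) \<longlonglongrightarrow> 0"
    using tendsto_add_zero assms unfolding asymptotic_def by blast
  then show ?thesis
    unfolding asymptotic_def by (rule tendsto_zero_le[rotated 2]) (simp_all add: dist_triangle)
qed

lemma asymptotic_eventually_eq:
  assumes "asymptotic u v" "eventually (\<lambda>i. u i = u' i \<and> v i = v' i) sequentially"
  shows "asymptotic u' v'"
  using assms(1) unfolding asymptotic_def
  by (rule Lim_transform_eventually) (use assms(2) in \<open>auto elim: eventually_mono\<close>)

lemma asymptotic_uniformly_continuous: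
  assumes "uniformly_continuous_on S h" "\<And>i. u i \<in> S" "\<And>i. v i \<in> S" "asymptotic u v"
  shows "asymptotic (\<lambda>i. h (u i)) (\<lambda>i. h (v i))"
  using assms unfolding asymptotic_def uniformly_continuous_on_sequentially by blast

lemma asymptotic_orbit_pseudo_orbit:
  assumes "uniformly_continuous_on UNIV f" "asymptotic (\<lambda>i. (f ^^ i) x) c"
  shows "asymptotic (\<lambda>i. f (c i)) (\<lambda>i. c (Suc i))"
proof -
  have "asymptotic (\<lambda>i. f (c i)) (\<lambda>i. f ((f ^^ i) x))"
    using asymptotic_uniformly_continuous[OF assms(1)] asymptotic_sym[OF assms(2)] by blast
  moreover have "asymptotic (\<lambda>i. f ((f ^^ i) x)) (\<lambda>i. c (Suc i))"
    using LIMSEQ_Suc[OF assms(2)[unfolded asymptotic_def]] unfolding asymptotic_def by simp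
  ultimately show ?thesis by (rule asymptotic_trans)
qed

lemma infdist_tendsto_asymptotic:
  assumes "(\<lambda>i. infdist (u i) (A i)) \<longlonglongrightarrow> 0" "asymptotic v u"
  shows "(\<lambda>i. infdist (v i) (A i)) \<longlonglongrightarrow> 0"
proof -
  have "(\<lambda>i. infdist (u i) (A i) + dist (v i) (u i)) \<longlonglongrightarrow> 0"
    using tendsto_add_zero[OF assms(1) assms(2)[unfolded asymptotic_def]] .
  then show ?thesis
    by (rule tendsto_zero_le[rotated 2]) (simp_all add: infdist_nonneg infdist_triangle)
qed

lemma infdist_tendsto_zeroE:
  assumes "\<And>i. A i \<noteq> {}" "(\<lambda>i. infdist (u i) (A i)) \<longlonglongrightarrow> 0"
  obtains a where "\<And>i. a i \<in> A i" "asymptotic u a"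
proof -
  have "\<exists>a. a \<in> A i \<and> dist (u i) a < infdist (u i) (A i) + inverse (real (Suc i))" for i
  proof -
    have "infdist (u i) (A i) < infdist (u i) (A i) + inverse (real (Suc i))" by simp
    then show ?thesis using infdist_lessE[OF assms(1)] by metis
  qed
  then obtain a where a: "\<And>i. a i \<in> A i" "\<And>i. dist (u i) (a i) < infdist (u i) (A i) + inverse (real (Suc i))"
    by metis
  have "(\<lambda>i. infdist (u i) (A i) + inverse (real (Suc i))) \<longlonglongrightarrow> 0"
    using tendsto_add_zero[OF assms(2) LIMSEQ_inverse_real_of_nat] .
  then have "asymptotic u a"
    unfolding asymptotic_def using a(2) by (intro tendsto_zero_le[OF zero_le_dist less_imp_le]) auto
  then show ?thesis using that a(1) by blast
qed

lemma infdist_tendsto_image: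
  assumes "uniformly_continuous_on S h" "\<And>i. u i \<in> S" "\<And>i. A i \<subseteq> S" "\<And>i. A i \<noteq> {}"
    and "(\<lambda>i. infdist (u i) (A i)) \<longlonglongrightarrow> 0"
  shows "(\<lambda>i. infdist (h (u i)) (h ` A i)) \<longlonglongrightarrow> 0"
proof -
  obtain a where a: "\<And>i. a i \<in> A i" "asymptotic u a"
    using infdist_tendsto_zeroE[OF assms(4,5)] by blast
  then have "asymptotic (\<lambda>i. h (u i)) (\<lambda>i. h (a i))"
    using assms(2,3) by (intro asymptotic_uniformly_continuous[OF assms(1)]) auto
  then show ?thesis unfolding asymptotic_def
    by (rule tendsto_zero_le[rotated 2]) (auto intro!: infdist_le imageI a(1) simp: infdist_nonneg)
qed

section \<open>Cyclic classes and their stable sets\<close>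

lemma cycle_gcd_dvd: "chain_of_length f C \<delta> k x x \<Longrightarrow> cycle_gcd f C \<delta> dvd k"
  unfolding cycle_gcd_def chain_of_length_def by (rule Gcd_dvd) auto

lemma cyc_rel_iff:
  "cyc_rel f C \<delta> x y \<longleftrightarrow> x \<in> C \<and> y \<in> C \<and> (\<exists>k. chain_of_length f C \<delta> k x y \<and> cycle_gcd f C \<delta> dvd k)"
  by (auto simp: cyc_rel_def chain_of_length_def)

lemma cyc_rel_trans: "cyc_rel f C \<delta> x y \<Longrightarrow> cyc_rel f C \<delta> y z \<Longrightarrow> cyc_rel f C \<delta> x z"
  unfolding cyc_rel_iff by (meson chain_of_length_trans dvd_add)

text \<open>Weaker than membership in cyc_classes_lim f C, but enough to determine class_at f C A \<delta>,
  and visibly preserved by a conjugacy.\<close>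
definition lies_in_one_class :: "('a::metric_space \<Rightarrow> 'a) \<Rightarrow> 'a set \<Rightarrow> 'a set \<Rightarrow> bool" where
  "lies_in_one_class f C A \<longleftrightarrow> (\<exists>p\<in>A. \<forall>a\<in>A. cyc_rel_lim f C p a)"

definition approaches_classes :: "('a::metric_space \<Rightarrow> 'a) \<Rightarrow> 'a set \<Rightarrow> 'a set \<Rightarrow> (nat \<Rightarrow> 'a) \<Rightarrow> bool" where
  "approaches_classes f C A u \<longleftrightarrow> (\<forall>\<delta>>0. (\<lambda>i. infdist (u i) ((f ^^ i) ` class_at f C A \<delta>)) \<longlonglongrightarrow> 0)"

lemma approaches_classes_asymptotic:
  assumes "approaches_classes f C A u" "asymptotic v u" shows "approaches_classes f C A v"
  unfolding approaches_classes_def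
proof (intro allI impI)
  fix \<delta> :: real assume "\<delta> > 0"
  then show "(\<lambda>i. infdist (v i) ((f ^^ i) ` class_at f C A \<delta>)) \<longlonglongrightarrow> 0"
    using assms(1) unfolding approaches_classes_def by (simp add: infdist_tendsto_asymptotic[OF _ assms(2)])
qed

context chain_component
begin

lemma cyc_rel_refl: "x \<in> C \<Longrightarrow> \<delta> > 0 \<Longrightarrow> cyc_rel f C \<delta> x x"
  unfolding cyc_rel_iff by (meson chain_of_length_within cycle_gcd_dvd)

lemma cyc_rel_sym:
  assumes "\<delta> > 0" "cyc_rel f C \<delta> x y" shows "cyc_rel f C \<delta> y x"
proof -
  obtain k where k: "x \<in> C" "y \<in> C" "chain_of_length f C \<delta> k x y" "cycle_gcd f C \<delta> dvd k"
    using assms(2) unfolding cyc_rel_iff by blast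
  obtain l where l: "chain_of_length f C \<delta> l y x" using chain_of_length_within[OF k(2,1) assms(1)] .
  have "cycle_gcd f C \<delta> dvd k + l" using cycle_gcd_dvd chain_of_length_trans[OF k(3) l] by blast
  then have "cycle_gcd f C \<delta> dvd l" using k(4) by (simp add: dvd_add_right_iff)
  then show ?thesis using k l unfolding cyc_rel_iff by blast
qed

lemma class_at_eq:
  assumes "\<delta> > 0" "p \<in> A" "\<forall>a\<in>A. cyc_rel f C \<delta> p a"
  shows "class_at f C A \<delta> = {y. cyc_rel f C \<delta> p y}"
  unfolding class_at_def
proof (rule the_equality)
  have "p \<in> C" using assms(2,3) by (auto simp: cyc_rel_def)
  then show "{y. cyc_rel f C \<delta> p y} \<in> cyc_classes f C \<delta> \<and> A \<subseteq> {y. cyc_rel f C \<delta> p y}"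
    using assms(3) unfolding cyc_classes_def by blast
next
  fix E assume E: "E \<in> cyc_classes f C \<delta> \<and> A \<subseteq> E"
  then obtain u where u: "E = {y. cyc_rel f C \<delta> u y}" unfolding cyc_classes_def by blast
  have up: "cyc_rel f C \<delta> u p" using E assms(2) unfolding u by blast
  have pu: "cyc_rel f C \<delta> p u" using cyc_rel_sym[OF assms(1) up] .
  show "E = {y. cyc_rel f C \<delta> p y}" unfolding u using cyc_rel_trans[OF up] cyc_rel_trans[OF pu] by blast
qed

lemma lies_in_one_class_class_at:
  assumes "lies_in_one_class f C A" "\<delta> > 0"
  obtains p where "p \<in> A" "\<forall>a\<in>A. cyc_rel f C \<delta> p a" "class_at f C A \<delta> = {y. cyc_rel f C \<delta> p y}"
proof -
  obtain p where p: "p \<in> A" "\<forall>a\<in>A. cyc_rel_lim f C p a"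
    using assms(1) unfolding lies_in_one_class_def by blast
  then have "\<forall>a\<in>A. cyc_rel f C \<delta> p a" using assms(2) by (simp add: cyc_rel_lim_def)
  then show ?thesis using that p(1) class_at_eq[OF assms(2) p(1)] by blast
qed

lemma class_at_bounds:
  assumes "lies_in_one_class f C A" "\<delta> > 0"
  shows "A \<subseteq> class_at f C A \<delta>" "class_at f C A \<delta> \<subseteq> C"
proof -
  obtain p where "\<forall>a\<in>A. cyc_rel f C \<delta> p a" "class_at f C A \<delta> = {y. cyc_rel f C \<delta> p y}"
    using lies_in_one_class_class_at[OF assms] by blast
  then show "A \<subseteq> class_at f C A \<delta>" "class_at f C A \<delta> \<subseteq> C" by (auto simp: cyc_rel_def)
qed

lemma cyc_classes_lim_lies_in_one_class:
  assumes "D \<in> cyc_classes_lim f C" shows "lies_in_one_class f C D"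
proof -
  obtain p where p: "p \<in> C" "D = {y. cyc_rel_lim f C p y}"
    using assms unfolding cyc_classes_lim_def by blast
  then have "p \<in> D" using cyc_rel_refl by (simp add: cyc_rel_lim_def)
  then show ?thesis using p unfolding lies_in_one_class_def by blast
qed

lemma stable_set_class_iff:
  assumes "lies_in_one_class f C A"
  shows "x \<in> stable_set_class f C A \<longleftrightarrow> approaches_classes f C A (\<lambda>i. (f ^^ i) x)"
proof
  assume "x \<in> stable_set_class f C A"
  then show "approaches_classes f C A (\<lambda>i. (f ^^ i) x)"
    unfolding stable_set_class_def approaches_classes_def by blast
next
  assume x: "approaches_classes f C A (\<lambda>i. (f ^^ i) x)"
  have "A \<noteq> {}" using assms by (auto simp: lies_in_one_class_def)
  then have "(f ^^ i) ` class_at f C A 1 \<subseteq> C" "(f ^^ i) ` class_at f C A 1 \<noteq> {}" for i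
    using class_at_bounds[OF assms, of 1] funpow_in_component by auto
  then have "infdist ((f ^^ i) x) C \<le> infdist ((f ^^ i) x) ((f ^^ i) ` class_at f C A 1)" for i
    by (rule infdist_mono)
  moreover have "(\<lambda>i. infdist ((f ^^ i) x) ((f ^^ i) ` class_at f C A 1)) \<longlonglongrightarrow> 0"
    using x unfolding approaches_classes_def by simp
  ultimately have "(\<lambda>i. infdist ((f ^^ i) x) C) \<longlonglongrightarrow> 0" by (rule tendsto_zero_le[OF infdist_nonneg])
  then have "x \<in> stable_set f C" by (simp add: stable_set_def)
  then show "x \<in> stable_set_class f C A"
    using x unfolding stable_set_class_def approaches_classes_def by blast
qed

lemma lies_in_one_class_subset_stable_set_class:
  assumes "lies_in_one_class f C A" shows "A \<subseteq> stable_set_class f C A"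
proof
  fix a assume "a \<in> A"
  then have "(f ^^ i) a \<in> (f ^^ i) ` class_at f C A \<delta>" if "\<delta> > 0" for i \<delta>
    using class_at_bounds(1)[OF assms that] by blast
  then show "a \<in> stable_set_class f C A"
    unfolding stable_set_class_iff[OF assms] approaches_classes_def by simp
qed

end

section \<open>Chains of all large lengths\<close>

lemma nat_submonoid_mult:
  fixes M :: "nat set"
  assumes "0 \<in> M" "\<forall>a\<in>M. \<forall>b\<in>M. a + b \<in> M" "a \<in> M"
  shows "q * a \<in> M"
  using assms by (induction q) auto

lemma nat_submonoid_Gcd_gap:
  fixes M :: "nat set"
  assumes "0 \<in> M" "\<forall>a\<in>M. \<forall>b\<in>M. a + b \<in> M" "s \<in> M" "0 < s"
  obtains a b where "a \<in> M" "b \<in> M" "a = b + Gcd M"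
proof -
  define D where "D = {d. 0 < d \<and> (\<exists>a\<in>M. \<exists>b\<in>M. a = b + d)}"
  have "s \<in> D" using assms unfolding D_def by force
  define d where "d = (LEAST d. d \<in> D)"
  have "d \<in> D" unfolding d_def using LeastI[of "\<lambda>d. d \<in> D", OF \<open>s \<in> D\<close>] .
  then obtain a b where ab: "a \<in> M" "b \<in> M" "a = b + d" "0 < d" unfolding D_def by blast
  have "d dvd x" if "x \<in> M" for x
  proof -
    define q r where "q = x div d" and "r = x mod d"
    have "x = q * d + r" by (simp add: q_def r_def)
    then have "x + q * b = q * a + r" using ab(3) by (simp add: algebra_simps)
    moreover have "x + q * b \<in> M" "q * a \<in> M"
      using assms(1,2) that ab(1,2) nat_submonoid_mult by auto
    ultimately have "r \<in> D" if "r \<noteq> 0" using that unfolding D_def by auto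
    moreover have "r < d" using ab(4) by (simp add: r_def)
    ultimately have "r = 0" using not_less_Least unfolding d_def by blast
    then show ?thesis by (simp add: r_def dvd_eq_mod_eq_0)
  qed
  then have "d dvd Gcd M" by (rule Gcd_greatest)
  moreover have "Gcd M dvd d" using ab(1-3) by (metis Gcd_dvd dvd_add_right_iff)
  ultimately have "d = Gcd M" by (simp add: dvd_antisym)
  then show ?thesis using that ab by blast
qed

lemma nat_multiple_as_combination:
  fixes a b d t l :: nat
  assumes "a = b + d" "b = t * d" "t * t \<le> l"
  obtains s r where "l * d = s * b + r * a"
proof -
  define q r where "q = l div t" and "r = l mod t"
  have "r \<le> q \<or> t = 0"
  proof (cases "t = 0")
    case False
    then have "t \<le> q" using assms(3) div_le_mono[of "t * t" l t] by (simp add: q_def)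
    moreover have "r < t" using False by (simp add: r_def)
    ultimately show ?thesis by simp
  qed simp
  define s where "s = q - r"
  have "s * t + r * t = q * t" using \<open>r \<le> q \<or> t = 0\<close> by (auto simp: s_def add_mult_distrib[symmetric])
  have "s * b + r * a = (s * t + r * t) * d + r * d" using assms(1,2) by (simp add: algebra_simps)
  also have "\<dots> = (q * t + r) * d" by (simp only: \<open>s * t + r * t = q * t\<close>) (simp add: algebra_simps)
  also have "\<dots> = l * d" by (simp add: q_def r_def)
  finally show ?thesis by (rule that[OF sym])
qed

lemma nat_submonoid_large_multiples:
  fixes M :: "nat set"
  assumes "0 \<in> M" "\<forall>a\<in>M. \<forall>b\<in>M. a + b \<in> M"
  obtains L0 where "\<forall>L\<ge>L0. Gcd M dvd L \<longrightarrow> L \<in> M"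
proof (cases "\<exists>s\<in>M. 0 < s")
  case False
  then have "Gcd M = 0" by auto
  then have "Gcd M dvd L \<longrightarrow> L \<in> M" for L using assms(1) by (simp del: Gcd_0_iff)
  then show ?thesis using that by blast
next
  case True
  then obtain a b where ab: "a \<in> M" "b \<in> M" "a = b + Gcd M"
    using nat_submonoid_Gcd_gap assms by metis
  obtain t where t: "b = t * Gcd M" using ab(2) by (metis Gcd_dvd dvd_def mult.commute)
  have "L \<in> M" if L: "t * t * Gcd M \<le> L" "Gcd M dvd L" for L
  proof (cases "Gcd M = 0")
    case True
    then show ?thesis using L assms(1) by (simp del: Gcd_0_iff)
  next
    case False
    obtain l where l: "L = l * Gcd M" using L(2) by (auto simp: dvd_def mult.commute)
    then have "t * t \<le> l" using L(1) False by simp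
    then obtain s r where "l * Gcd M = s * b + r * a" using nat_multiple_as_combination[OF ab(3) t] by blast
    moreover have "s * b + r * a \<in> M"
      using assms(2) nat_submonoid_mult[OF assms ab(1)] nat_submonoid_mult[OF assms ab(2)] by blast
    ultimately show ?thesis using l by simp
  qed
  then show ?thesis using that by blast
qed

lemma compact_nat_bound:
  assumes "compact K" "\<forall>x\<in>K. \<exists>U n. open U \<and> x \<in> U \<and> (\<forall>y\<in>K \<inter> U. P y n)"
  obtains N :: nat where "\<forall>x\<in>K. \<exists>n\<le>N. P x n"
proof -
  obtain U n where Un: "\<forall>x\<in>K. open (U x) \<and> x \<in> U x \<and> (\<forall>y\<in>K \<inter> U x. P y (n x))"
    using assms(2) by metis
  then have "K \<subseteq> (\<Union>x\<in>K. U x)" by blast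
  then obtain F where F: "F \<subseteq> K" "finite F" "K \<subseteq> (\<Union>x\<in>F. U x)"
    using compactE_image[OF assms(1), of K U] Un by metis
  have "\<exists>m\<le>Max (n ` F). P y m" if y: "y \<in> K" for y
  proof -
    obtain x where "x \<in> F" "y \<in> U x" using F(3) y by blast
    then show ?thesis using Un F(1,2) y by (intro exI[of _ "n x"]) auto
  qed
  then show ?thesis using that by blast
qed

context chain_component
begin

lemma Gcd_cycle_lengths_dvd_cycle_gcd:
  assumes "u \<in> C" "\<delta> > 0"
  shows "Gcd {l. chain_of_length f C \<delta> l u u} dvd cycle_gcd f C \<delta>"
  unfolding cycle_gcd_def
proof (rule Gcd_greatest)
  let ?S = "{l. chain_of_length f C \<delta> l u u}"
  fix l assume "l \<in> {k. \<exists>c. delta_chain_on f C \<delta> c k \<and> c 0 = c k}"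
  then obtain w where w: "chain_of_length f C \<delta> l w w" unfolding chain_of_length_def by auto
  obtain a where a: "chain_of_length f C \<delta> a u w"
    using chain_of_length_within[OF assms(1) chain_of_length_mem(1)[OF w] assms(2)] .
  obtain b where b: "chain_of_length f C \<delta> b w u"
    using chain_of_length_within[OF chain_of_length_mem(1)[OF w] assms(1,2)] .
  have "a + b \<in> ?S" using chain_of_length_trans[OF a b] by simp
  moreover have "a + l + b \<in> ?S" using chain_of_length_trans[OF chain_of_length_trans[OF a w] b] by simp
  ultimately have "Gcd ?S dvd a + b" "Gcd ?S dvd (a + b) + l" by (simp_all add: Gcd_dvd ac_simps)
  then show "Gcd ?S dvd l" by (simp add: dvd_add_right_iff)
qed

lemma chain_of_length_bounded_lengths:
  assumes "u \<in> C" "\<delta> > 0"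
  obtains Q where "\<forall>v\<in>C. \<exists>q\<le>Q. chain_of_length f C \<delta> q u v"
proof -
  have "\<forall>v\<in>C. \<exists>U q. open U \<and> v \<in> U \<and> (\<forall>v'\<in>C \<inter> U. chain_of_length f C \<delta> q u v')"
  proof
    fix v assume "v \<in> C"
    have "\<delta>/2 > 0" using assms(2) by simp
    then obtain q where q: "chain_of_length f C (\<delta>/2) q u v"
      using chain_of_length_within[OF assms(1) \<open>v \<in> C\<close>] by blast
    have "chain_of_length f C \<delta> q u v'" if "v' \<in> C \<inter> ball v (\<delta>/2)" for v'
      using chain_of_length_move_end[OF q, of v' "\<delta>/2"] that by simp
    then show "\<exists>U q. open U \<and> v \<in> U \<and> (\<forall>v'\<in>C \<inter> U. chain_of_length f C \<delta> q u v')"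
      using \<open>\<delta>/2 > 0\<close> by (intro exI[of _ "ball v (\<delta>/2)"] exI[of _ q]) auto
  qed
  then show ?thesis using that by (rule compact_nat_bound[OF compact_component])
qed

text \<open>The cycle lengths at u form an additive monoid whose gcd divides the cycle gcd, so they contain
  all large multiples of the latter; compactness bounds the length of a shortest chain from u to any v.\<close>
lemma chain_of_length_all_large_lengths:
  assumes "u \<in> C" "\<delta> > 0"
  obtains L0 where "\<And>v k L. chain_of_length f C \<delta> k u v \<Longrightarrow> L0 \<le> L \<Longrightarrow> [k = L] (mod cycle_gcd f C \<delta>)
    \<Longrightarrow> chain_of_length f C \<delta> L u v"
proof -
  let ?m = "cycle_gcd f C \<delta>"
  define M where "M = insert 0 {l. chain_of_length f C \<delta> l u u}"
  have "0 \<in> M" by (simp add: M_def)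
  moreover have "\<forall>a\<in>M. \<forall>b\<in>M. a + b \<in> M" unfolding M_def by (auto intro: chain_of_length_trans)
  ultimately obtain L1 where L1: "\<forall>L\<ge>L1. Gcd M dvd L \<longrightarrow> L \<in> M"
    using nat_submonoid_large_multiples by blast
  have "Gcd M dvd ?m" using Gcd_cycle_lengths_dvd_cycle_gcd[OF assms] by (simp add: M_def)
  obtain Q where Q: "\<forall>v\<in>C. \<exists>q\<le>Q. chain_of_length f C \<delta> q u v"
    using chain_of_length_bounded_lengths[OF assms] .
  have "chain_of_length f C \<delta> L u v"
    if k: "chain_of_length f C \<delta> k u v" and L: "Q + L1 \<le> L" "[k = L] (mod ?m)" for v k L
  proof -
    obtain q where q: "q \<le> Q" "chain_of_length f C \<delta> q u v"
      using Q chain_of_length_mem(2)[OF k] by blast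
    obtain r where r: "chain_of_length f C \<delta> r v u"
      using chain_of_length_within[OF chain_of_length_mem(2)[OF k] assms] .
    have qr: "[q + r = 0] (mod ?m)"
      using cycle_gcd_dvd[OF chain_of_length_trans[OF q(2) r]] by (simp add: cong_0_iff)
    have "[L + r = k + r] (mod ?m)" using cong_sym[OF L(2)] by (simp add: cong_add_rcancel_nat)
    also have "[k + r = 0] (mod ?m)"
      using cycle_gcd_dvd[OF chain_of_length_trans[OF k r]] by (simp add: cong_0_iff)
    also have "[0 = q + r] (mod ?m)" using cong_sym[OF qr] .
    finally have "[L = q] (mod ?m)" by (simp add: cong_add_rcancel_nat)
    moreover have "q \<le> L" using q(1) L(1) by linarith
    ultimately have "?m dvd L - q" by (simp add: cong_altdef_nat)
    moreover have "L1 \<le> L - q" using q(1) L(1) by linarith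
    ultimately have "L - q \<in> M" using L1 \<open>Gcd M dvd ?m\<close> dvd_trans by blast
    show ?thesis
    proof (cases "L - q = 0")
      case True
      then show ?thesis using q(2) \<open>q \<le> L\<close> by simp
    next
      case False
      then have "chain_of_length f C \<delta> (L - q) u u" using \<open>L - q \<in> M\<close> by (simp add: M_def)
      then have "chain_of_length f C \<delta> (L - q + q) u v" using chain_of_length_trans[OF _ q(2)] by blast
      then show ?thesis using \<open>q \<le> L\<close> by simp
    qed
  qed
  then show ?thesis using that by blast
qed

text \<open>A chain from (f ^^ N) a back to a closes the orbit segment from a to a cycle, so its length
  is congruent to -N modulo the cycle gcd.\<close>
lemma chain_of_length_between_class_orbits:
  assumes "cyc_rel f C \<delta> a b" "\<delta> > 0" "1 \<le> N" "N \<le> T"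
  obtains k where "chain_of_length f C \<delta> k ((f ^^ N) a) ((f ^^ T) b)" "[k = T - N] (mod cycle_gcd f C \<delta>)"
proof -
  let ?m = "cycle_gcd f C \<delta>"
  obtain l where ab: "a \<in> C" "b \<in> C" and l: "chain_of_length f C \<delta> l a b" "?m dvd l"
    using assms(1) unfolding cyc_rel_iff by blast
  have orbit: "chain_of_length f C \<delta> n x ((f ^^ n) x)" if "x \<in> C" "1 \<le> n" for x n
    by (intro chain_of_length_orbit) (use that funpow_in_component \<open>\<delta> > 0\<close> in auto)
  obtain p where p: "chain_of_length f C \<delta> p ((f ^^ N) a) a"
    using chain_of_length_within[OF funpow_in_component[OF ab(1)] ab(1) \<open>\<delta> > 0\<close>] .
  have "?m dvd N + p" using cycle_gcd_dvd[OF chain_of_length_trans[OF orbit[OF ab(1) assms(3)] p]] .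
  have "1 \<le> T" using assms(3,4) by linarith
  have "chain_of_length f C \<delta> (p + l + T) ((f ^^ N) a) ((f ^^ T) b)"
    using chain_of_length_trans[OF chain_of_length_trans[OF p l(1)] orbit[OF ab(2) \<open>1 \<le> T\<close>]] .
  moreover have "[p + l + T = T - N] (mod ?m)"
  proof -
    have eq: "p + l + T = (T - N) + ((N + p) + l)" using assms(4) by simp
    have "[(N + p) + l = 0] (mod ?m)" using \<open>?m dvd N + p\<close> l(2) by (simp add: cong_0_iff)
    then have "[(T - N) + ((N + p) + l) = (T - N) + 0] (mod ?m)" by (rule cong_add[OF cong_refl])
    then show ?thesis unfolding eq by simp
  qed
  ultimately show ?thesis using that by blast
qed

end

section \<open>Shadowing into the stable set of a class\<close>

lemma delta_chain_then_pseudo_orbit: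
  assumes "delta_chain f \<delta> c T" "c T = P T" "\<forall>i\<ge>T. dist (f (P i)) (P (Suc i)) \<le> \<delta>"
  shows "dist (f (if i \<le> T then c i else P i)) (if Suc i \<le> T then c (Suc i) else P (Suc i)) \<le> \<delta>"
proof (cases i T rule: linorder_cases)
  case less
  then show ?thesis using assms(1) by (simp add: delta_chain_def)
next
  case equal
  then show ?thesis using assms(2,3) by simp
next
  case greater
  then show ?thesis using assms(3) by simp
qed

context chain_component
begin

lemma approaches_classes_eventually_near:
  assumes A: "lies_in_one_class f C A" and u: "approaches_classes f C A u" and "\<delta> > 0"
  obtains N where "\<forall>i\<ge>N. \<exists>a\<in>class_at f C A \<delta>. dist (u i) ((f ^^ i) a) < \<delta>"
proof -
  have "A \<noteq> {}" using A by (auto simp: lies_in_one_class_def)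
  then have ne: "(f ^^ i) ` class_at f C A \<delta> \<noteq> {}" for i using class_at_bounds(1)[OF A \<open>\<delta> > 0\<close>] by blast
  have "(\<lambda>i. infdist (u i) ((f ^^ i) ` class_at f C A \<delta>)) \<longlonglongrightarrow> 0"
    using u \<open>\<delta> > 0\<close> unfolding approaches_classes_def by blast
  then have "eventually (\<lambda>i. infdist (u i) ((f ^^ i) ` class_at f C A \<delta>) < \<delta>) sequentially"
    using \<open>\<delta> > 0\<close> by (rule order_tendstoD(2))
  then obtain N where N: "\<forall>i\<ge>N. infdist (u i) ((f ^^ i) ` class_at f C A \<delta>) < \<delta>"
    unfolding eventually_sequentially by blast
  have "\<exists>a\<in>class_at f C A \<delta>. dist (u i) ((f ^^ i) a) < \<delta>" if i: "N \<le> i" for i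
  proof -
    obtain b where "b \<in> (f ^^ i) ` class_at f C A \<delta>" "dist (u i) b < \<delta>"
      using infdist_lessE[OF ne N[rule_format, OF i]] by blast
    then show ?thesis by blast
  qed
  then show ?thesis using that by blast
qed

text \<open>Follow the orbit of w until it is close to the orbit of a point a of the class, jump to
  the orbit of a, and cross the class by a chain of exactly the remaining length to a point close to P T.\<close>
lemma chain_from_stable_point_to_classes:
  assumes A: "lies_in_one_class f C A" and w: "w \<in> stable_set_class f C A"
    and P: "approaches_classes f C A P" and "\<delta> > 0"
  obtains T0 where "\<forall>T\<ge>T0. chain_of_length f UNIV \<delta> T w (P T)"
proof -
  define \<gamma> where "\<gamma> = \<delta> / 2"
  have "\<gamma> > 0" using \<open>\<delta> > 0\<close> by (simp add: \<gamma>_def)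
  define E where "E = class_at f C A \<gamma>"
  obtain p where E: "E = {y. cyc_rel f C \<gamma> p y}"
    using lies_in_one_class_class_at[OF A \<open>\<gamma> > 0\<close>] unfolding E_def by blast
  have "E \<subseteq> C" using class_at_bounds(2)[OF A \<open>\<gamma> > 0\<close>] unfolding E_def .
  have same_class: "cyc_rel f C \<gamma> a b" if "a \<in> E" "b \<in> E" for a b
    using cyc_rel_trans[OF cyc_rel_sym[OF \<open>\<gamma> > 0\<close>]] that unfolding E by blast
  obtain N0 where N0: "\<forall>i\<ge>N0. \<exists>a\<in>E. dist ((f ^^ i) w) ((f ^^ i) a) < \<gamma>"
    using approaches_classes_eventually_near[OF A w[unfolded stable_set_class_iff[OF A]] \<open>\<gamma> > 0\<close>]
    unfolding E_def by blast
  define N where "N = Suc N0"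
  have "1 \<le> N" "N0 \<le> N" by (simp_all add: N_def)
  then obtain a where a: "a \<in> E" "dist ((f ^^ N) w) ((f ^^ N) a) < \<gamma>" using N0 by blast
  define u where "u = (f ^^ N) a"
  have "u \<in> C" using a(1) \<open>E \<subseteq> C\<close> funpow_in_component by (auto simp: u_def)
  obtain L0 where L0: "\<And>v k L. chain_of_length f C \<gamma> k u v \<Longrightarrow> L0 \<le> L \<Longrightarrow> [k = L] (mod cycle_gcd f C \<gamma>)
      \<Longrightarrow> chain_of_length f C \<gamma> L u v"
    using chain_of_length_all_large_lengths[OF \<open>u \<in> C\<close> \<open>\<gamma> > 0\<close>] by blast
  obtain M where M: "\<forall>i\<ge>M. \<exists>b\<in>E. dist (P i) ((f ^^ i) b) < \<gamma>"
    using approaches_classes_eventually_near[OF A P \<open>\<gamma> > 0\<close>] unfolding E_def by blast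
  have "chain_of_length f UNIV \<delta> T w (P T)" if T: "N + L0 + M \<le> T" for T
  proof -
    have "M \<le> T" using T by simp
    then obtain b where b: "b \<in> E" "dist (P T) ((f ^^ T) b) < \<gamma>" using M by blast
    have "N \<le> T" "L0 \<le> T - N" using T by simp_all
    obtain k where "chain_of_length f C \<gamma> k u ((f ^^ T) b)" "[k = T - N] (mod cycle_gcd f C \<gamma>)"
      using chain_of_length_between_class_orbits[OF same_class[OF a(1) b(1)] \<open>\<gamma> > 0\<close> \<open>1 \<le> N\<close> \<open>N \<le> T\<close>]
      unfolding u_def by blast
    then have "chain_of_length f C \<gamma> (T - N) u ((f ^^ T) b)" using L0 \<open>L0 \<le> T - N\<close> by blast
    then have to_b: "chain_of_length f UNIV \<gamma> (T - N) u ((f ^^ T) b)"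
      using chain_of_length_mono by blast
    have "chain_of_length f UNIV 0 N w ((f ^^ N) w)"
      using chain_of_length_orbit[of N 0 f w UNIV] \<open>1 \<le> N\<close> by simp
    then have "chain_of_length f UNIV (0 + \<gamma>) N w u"
      by (rule chain_of_length_move_end) (use a(2) in \<open>auto simp: u_def\<close>)
    then have "chain_of_length f UNIV \<gamma> (N + (T - N)) w ((f ^^ T) b)"
      using chain_of_length_trans[OF _ to_b] by simp
    then have "chain_of_length f UNIV \<gamma> T w ((f ^^ T) b)" using \<open>N \<le> T\<close> by simp
    then have "chain_of_length f UNIV (\<gamma> + \<gamma>) T w (P T)"
      by (rule chain_of_length_move_end) (use b(2) in \<open>auto simp: dist_commute\<close>)
    then show ?thesis by (simp add: \<gamma>_def)
  qed
  then show ?thesis using that by blast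
qed

lemma join_stable_point_to_pseudo_orbit:
  assumes A: "lies_in_one_class f C A" and w: "w \<in> stable_set_class f C A"
    and P: "asymptotic (\<lambda>i. f (P i)) (\<lambda>i. P (Suc i))" "approaches_classes f C A P" and "\<delta> > 0"
  obtains Q where "Q 0 = w" "\<forall>i. dist (f (Q i)) (Q (Suc i)) \<le> \<delta>" "eventually (\<lambda>i. Q i = P i) sequentially"
proof -
  obtain T0 where T0: "\<forall>T\<ge>T0. chain_of_length f UNIV \<delta> T w (P T)"
    using chain_from_stable_point_to_classes[OF A w P(2) \<open>\<delta> > 0\<close>] by blast
  have "eventually (\<lambda>i. dist (f (P i)) (P (Suc i)) < \<delta>) sequentially"
    using P(1) \<open>\<delta> > 0\<close> unfolding asymptotic_def by (rule order_tendstoD(2))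
  then obtain M where M: "\<forall>i\<ge>M. dist (f (P i)) (P (Suc i)) < \<delta>"
    unfolding eventually_sequentially by blast
  define T where "T = T0 + M"
  have "chain_of_length f UNIV \<delta> T w (P T)" using T0 by (simp add: T_def)
  then obtain c where c: "delta_chain f \<delta> c T" "c 0 = w" "c T = P T"
    unfolding chain_of_length_def delta_chain_on_def by blast
  have "\<forall>i\<ge>T. dist (f (P i)) (P (Suc i)) \<le> \<delta>"
  proof (intro allI impI)
    fix i assume "T \<le> i"
    then have "M \<le> i" by (simp add: T_def)
    then show "dist (f (P i)) (P (Suc i)) \<le> \<delta>" using M less_imp_le by blast
  qed
  define Q where "Q i = (if i \<le> T then c i else P i)" for i
  have "Q 0 = w" using c(2) by (simp add: Q_def)
  moreover have "\<forall>i. dist (f (Q i)) (Q (Suc i)) \<le> \<delta>"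
    unfolding Q_def using delta_chain_then_pseudo_orbit[OF c(1,3) \<open>\<forall>i\<ge>T. _\<close>] by blast
  moreover have "eventually (\<lambda>i. Q i = P i) sequentially"
    unfolding Q_def eventually_sequentially by (intro exI[of _ "Suc T"]) auto
  ultimately show ?thesis by (rule that)
qed

lemma shadow_into_stable_set_class:
  assumes shadowing: "s_limit_shadowing f" and A: "lies_in_one_class f C A"
    and w: "w \<in> stable_set_class f C A"
    and P: "asymptotic (\<lambda>i. f (P i)) (\<lambda>i. P (Suc i))" "approaches_classes f C A P" and "\<epsilon> > 0"
  obtains y where "dist y w < \<epsilon>" "asymptotic (\<lambda>i. (f ^^ i) y) P" "y \<in> stable_set_class f C A"
proof -
  have "\<epsilon>/2 > 0" using \<open>\<epsilon> > 0\<close> by simp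
  then obtain \<delta> where "\<delta> > 0" and shadow: "\<forall>Q. (\<forall>i. dist (f (Q i)) (Q (Suc i)) \<le> \<delta>) \<and>
      asymptotic (\<lambda>i. f (Q i)) (\<lambda>i. Q (Suc i)) \<longrightarrow>
      (\<exists>y. (\<forall>i. dist ((f ^^ i) y) (Q i) \<le> \<epsilon>/2) \<and> asymptotic (\<lambda>i. (f ^^ i) y) Q)"
    using shadowing unfolding s_limit_shadowing_def asymptotic_def by blast
  obtain Q where Q: "Q 0 = w" "\<forall>i. dist (f (Q i)) (Q (Suc i)) \<le> \<delta>" "eventually (\<lambda>i. Q i = P i) sequentially"
    using join_stable_point_to_pseudo_orbit[OF A w P \<open>\<delta> > 0\<close>] by blast
  obtain N where N: "\<forall>i\<ge>N. Q i = P i" using Q(3) unfolding eventually_sequentially by blast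
  have "eventually (\<lambda>i. f (P i) = f (Q i) \<and> P (Suc i) = Q (Suc i)) sequentially"
    unfolding eventually_sequentially using N by (intro exI[of _ N]) auto
  then have "asymptotic (\<lambda>i. f (Q i)) (\<lambda>i. Q (Suc i))" by (rule asymptotic_eventually_eq[OF P(1)])
  then obtain y where y: "\<forall>i. dist ((f ^^ i) y) (Q i) \<le> \<epsilon>/2" "asymptotic (\<lambda>i. (f ^^ i) y) Q"
    using shadow Q(2) by blast
  have "dist y w \<le> \<epsilon>/2" using spec[OF y(1), of 0] Q(1) by simp
  then have "dist y w < \<epsilon>" using \<open>\<epsilon> > 0\<close> by linarith
  moreover have "eventually (\<lambda>i. (f ^^ i) y = (f ^^ i) y \<and> Q i = P i) sequentially" using Q(3) by simp
  then have "asymptotic (\<lambda>i. (f ^^ i) y) P" by (rule asymptotic_eventually_eq[OF y(2)])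
  moreover have "y \<in> stable_set_class f C A"
    using approaches_classes_asymptotic[OF P(2) \<open>asymptotic (\<lambda>i. (f ^^ i) y) P\<close>]
    unfolding stable_set_class_iff[OF A] .
  ultimately show ?thesis by (rule that)
qed

end

section \<open>Transfer of scrambled tuples\<close>

lemma full_family_eventually_mono:
  assumes "full_family F" "A \<in> F" "\<forall>i\<ge>M. i \<in> A \<longrightarrow> i \<in> B"
  shows "B \<in> F"
proof -
  have "{i \<in> A. i \<ge> M} \<in> F" using assms(1,2) by (simp add: full_family_def)
  moreover have "{i \<in> A. i \<ge> M} \<subseteq> B" using assms(3) by blast
  ultimately show ?thesis using assms(1) unfolding full_family_def furstenberg_family_def by blast
qed

lemma asymptotic_tuples_close:
  fixes n :: nat
  assumes "\<forall>j<n. asymptotic (u j) (v j)" "\<forall>j<n. asymptotic (u' j) (v' j)" "e > 0" "e' > 0"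
  obtains M where "\<forall>i\<ge>M. \<forall>j<n. dist (u j i) (v j i) < e \<and> dist (u' j i) (v' j i) < e'"
proof -
  have "eventually (\<lambda>i. dist (u j i) (v j i) < e \<and> dist (u' j i) (v' j i) < e') sequentially"
    if "j < n" for j
    using order_tendstoD(2)[OF assms(1)[rule_format, OF that, unfolded asymptotic_def] assms(3)]
      order_tendstoD(2)[OF assms(2)[rule_format, OF that, unfolded asymptotic_def] assms(4)]
    by (rule eventually_conj)
  then have "\<forall>j\<in>{..<n}. eventually (\<lambda>i. dist (u j i) (v j i) < e \<and> dist (u' j i) (v' j i) < e') sequentially"
    by simp
  then have "eventually (\<lambda>i. \<forall>j\<in>{..<n}. dist (u j i) (v j i) < e \<and> dist (u' j i) (v' j i) < e') sequentially"
    by (rule eventually_ball_finite[OF finite_lessThan])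
  then obtain M where "\<forall>i\<ge>M. \<forall>j\<in>{..<n}. dist (u j i) (v j i) < e \<and> dist (u' j i) (v' j i) < e'"
    unfolding eventually_sequentially by blast
  then have "\<forall>i\<ge>M. \<forall>j<n. dist (u j i) (v j i) < e \<and> dist (u' j i) (v' j i) < e'" by simp
  then show ?thesis by (rule that)
qed

lemma dist_triangle_chain: "dist a d \<le> dist a b + dist b c + dist c d"
  using dist_triangle[of a d b] dist_triangle[of b d c] by linarith

lemma S_set_transfer:
  assumes F: "full_family F" "S_set f n x \<delta> \<in> F"
    and sep: "\<forall>a\<in>C. \<forall>b\<in>C. dist (h a) (h b) < \<eta> \<longrightarrow> dist a b < \<delta>/2" and "\<eta> > 0" "\<delta> > 0"
    and c: "\<forall>j<n. \<forall>i. c j i \<in> C" "\<forall>j<n. asymptotic (\<lambda>i. (f ^^ i) (x j)) (c j)"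
    and y: "\<forall>j<n. asymptotic (\<lambda>i. (g ^^ i) (y j)) (\<lambda>i. h (c j i))"
  shows "S_set g n y (\<eta>/2) \<in> F"
proof -
  obtain M where M: "\<forall>i\<ge>M. \<forall>j<n. dist ((f ^^ i) (x j)) (c j i) < \<delta>/4 \<and> dist ((g ^^ i) (y j)) (h (c j i)) < \<eta>/4"
    using asymptotic_tuples_close[OF c(2) y, of "\<delta>/4" "\<eta>/4"] \<open>\<delta> > 0\<close> \<open>\<eta> > 0\<close> by auto
  have "i \<in> S_set g n y (\<eta>/2)" if i: "M \<le> i" "i \<in> S_set f n x \<delta>" for i
    unfolding S_set_def
  proof (intro CollectI allI impI)
    fix j l assume jl: "j < l \<and> l < n"
    then have close: "dist ((f ^^ i) (x j)) (c j i) < \<delta>/4" "dist (c l i) ((f ^^ i) (x l)) < \<delta>/4"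
      "dist (h (c j i)) ((g ^^ i) (y j)) < \<eta>/4" "dist ((g ^^ i) (y l)) (h (c l i)) < \<eta>/4"
      using M i(1) by (auto simp: dist_commute)
    have "\<delta> < dist ((f ^^ i) (x j)) ((f ^^ i) (x l))" using i(2) jl by (simp add: S_set_def)
    also have "\<dots> \<le> dist ((f ^^ i) (x j)) (c j i) + dist (c j i) (c l i) + dist (c l i) ((f ^^ i) (x l))"
      by (rule dist_triangle_chain)
    finally have "\<delta>/2 \<le> dist (c j i) (c l i)" using close(1,2) by linarith
    moreover have "c j i \<in> C" "c l i \<in> C" using c(1) jl by auto
    ultimately have "\<eta> \<le> dist (h (c j i)) (h (c l i))" using sep by (meson not_le)
    also have "\<dots> \<le> dist (h (c j i)) ((g ^^ i) (y j)) + dist ((g ^^ i) (y j)) ((g ^^ i) (y l))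
        + dist ((g ^^ i) (y l)) (h (c l i))"
      by (rule dist_triangle_chain)
    finally show "\<eta>/2 < dist ((g ^^ i) (y j)) ((g ^^ i) (y l))" using close(3,4) by linarith
  qed
  then show ?thesis using full_family_eventually_mono[OF F] by blast
qed

lemma T_set_transfer:
  assumes G: "full_family G" "\<forall>r>0. T_set f n x r \<in> G"
    and h: "uniformly_continuous_on C h" and "e > 0"
    and c: "\<forall>j<n. \<forall>i. c j i \<in> C" "\<forall>j<n. asymptotic (\<lambda>i. (f ^^ i) (x j)) (c j)"
    and y: "\<forall>j<n. asymptotic (\<lambda>i. (g ^^ i) (y j)) (\<lambda>i. h (c j i))"
  shows "T_set g n y e \<in> G"
proof -
  have "e/2 > 0" using \<open>e > 0\<close> by simp
  then obtain r where r: "r > 0" "\<forall>b\<in>C. \<forall>a\<in>C. dist a b < r \<longrightarrow> dist (h a) (h b) < e/2"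
    using h unfolding uniformly_continuous_on_def by blast
  obtain M where M: "\<forall>i\<ge>M. \<forall>j<n. dist ((f ^^ i) (x j)) (c j i) < r/4 \<and> dist ((g ^^ i) (y j)) (h (c j i)) < e/4"
    using asymptotic_tuples_close[OF c(2) y, of "r/4" "e/4"] \<open>r > 0\<close> \<open>e > 0\<close> by auto
  have "i \<in> T_set g n y e" if i: "M \<le> i" "i \<in> T_set f n x (r/2)" for i
    unfolding T_set_def
  proof (intro CollectI allI impI)
    fix j l assume jl: "j < l \<and> l < n"
    then have close: "dist (c j i) ((f ^^ i) (x j)) < r/4" "dist ((f ^^ i) (x l)) (c l i) < r/4"
      "dist ((g ^^ i) (y j)) (h (c j i)) < e/4" "dist (h (c l i)) ((g ^^ i) (y l)) < e/4"
      using M i(1) by (auto simp: dist_commute)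
    have mid: "dist ((f ^^ i) (x j)) ((f ^^ i) (x l)) < r/2" using i(2) jl unfolding T_set_def by blast
    have "dist (c j i) (c l i) \<le> dist (c j i) ((f ^^ i) (x j)) + dist ((f ^^ i) (x j)) ((f ^^ i) (x l))
        + dist ((f ^^ i) (x l)) (c l i)"
      by (rule dist_triangle_chain)
    also have "\<dots> < r" using close(1,2) mid by linarith
    moreover have "c j i \<in> C" "c l i \<in> C" using c(1) jl by auto
    ultimately have "dist (h (c j i)) (h (c l i)) < e/2" using r(2) by auto
    have "dist ((g ^^ i) (y j)) ((g ^^ i) (y l)) \<le> dist ((g ^^ i) (y j)) (h (c j i))
        + dist (h (c j i)) (h (c l i)) + dist (h (c l i)) ((g ^^ i) (y l))"
      by (rule dist_triangle_chain)
    then show "dist ((g ^^ i) (y j)) ((g ^^ i) (y l)) < e"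
      using close(3,4) \<open>dist (h (c j i)) (h (c l i)) < e/2\<close> by linarith
  qed
  moreover have "T_set f n x (r/2) \<in> G" using G(2) \<open>r > 0\<close> by simp
  ultimately show ?thesis using full_family_eventually_mono[OF G(1)] by blast
qed

section \<open>Conjugate chain components\<close>

locale conjugate_chain_components =
  X: chain_component f C + Y: chain_component g C'
  for f :: "'a::metric_space \<Rightarrow> 'a" and C and g :: "'b::metric_space \<Rightarrow> 'b" and C' +
  fixes h :: "'a \<Rightarrow> 'b" and k :: "'b \<Rightarrow> 'a"
  assumes homeomorphism: "homeomorphism C C' h k"
    and conjugacy: "\<forall>x\<in>C. h (f x) = g (h x)"
begin

lemma h_image: "h ` C = C'"
  using homeomorphism by (simp add: homeomorphism_def)

lemma h_uniformly_continuous: "uniformly_continuous_on C h"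
  using homeomorphism X.compact_component compact_uniformly_continuous by (auto simp: homeomorphism_def)

lemma h_inverse_modulus:
  assumes "\<epsilon> > 0"
  obtains \<eta> where "\<eta> > 0" "\<forall>a\<in>C. \<forall>b\<in>C. dist (h a) (h b) < \<eta> \<longrightarrow> dist a b < \<epsilon>"
proof -
  have "uniformly_continuous_on C' k"
    using homeomorphism Y.compact_component compact_uniformly_continuous by (auto simp: homeomorphism_def)
  then obtain \<eta> where "\<eta> > 0" "\<forall>u\<in>C'. \<forall>v\<in>C'. dist v u < \<eta> \<longrightarrow> dist (k v) (k u) < \<epsilon>"
    using assms unfolding uniformly_continuous_on_def by blast
  moreover have "h a \<in> C'" "k (h a) = a" if "a \<in> C" for a
    using homeomorphism that by (auto simp: homeomorphism_def)
  ultimately show ?thesis using that by (metis dist_commute)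
qed

lemma h_funpow: "x \<in> C \<Longrightarrow> h ((f ^^ i) x) = (g ^^ i) (h x)"
  by (induction i) (simp_all add: conjugacy X.funpow_in_component)

lemma chain_of_length_image:
  assumes "\<delta> > 0"
  obtains \<delta>f where "\<delta>f > 0" "\<And>k x y. chain_of_length f C \<delta>f k x y \<Longrightarrow> chain_of_length g C' \<delta> k (h x) (h y)"
proof -
  obtain r where r: "r > 0" "\<forall>b\<in>C. \<forall>a\<in>C. dist a b < r \<longrightarrow> dist (h a) (h b) < \<delta>"
    using h_uniformly_continuous assms unfolding uniformly_continuous_on_def by blast
  have "chain_of_length g C' \<delta> k (h x) (h y)" if xy: "chain_of_length f C (r/2) k x y" for k x y
  proof -
    obtain c where c: "delta_chain_on f C (r/2) c k" "c 0 = x" "c k = y"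
      using xy by (auto simp: chain_of_length_def)
    have "dist (g (h (c i))) (h (c (Suc i))) \<le> \<delta>" if "i < k" for i
    proof -
      have "c i \<in> C" "c (Suc i) \<in> C" "dist (f (c i)) (c (Suc i)) \<le> r/2"
        using c(1) that by (auto simp: delta_chain_on_def delta_chain_def)
      then have "dist (h (f (c i))) (h (c (Suc i))) < \<delta>"
        using r X.map_in_component \<open>r > 0\<close> by simp
      then show ?thesis using conjugacy \<open>c i \<in> C\<close> by simp
    qed
    moreover have "h (c i) \<in> C'" if "i \<le> k" for i
      using c(1) that h_image by (auto simp: delta_chain_on_def)
    moreover have "1 \<le> k" using c(1) by (simp add: delta_chain_on_def delta_chain_def)
    ultimately show ?thesis using c(2,3) unfolding chain_of_length_def delta_chain_on_def delta_chain_def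
      by (intro exI[of _ "\<lambda>i. h (c i)"]) auto
  qed
  then show ?thesis using that \<open>r > 0\<close> by (meson half_gt_zero)
qed

lemma cyc_rel_image:
  assumes "\<delta> > 0"
  obtains \<delta>f where "\<delta>f > 0" "\<And>x y. cyc_rel f C \<delta>f x y \<Longrightarrow> cyc_rel g C' \<delta> (h x) (h y)"
proof -
  obtain \<delta>f where \<delta>f: "\<delta>f > 0" "\<And>k x y. chain_of_length f C \<delta>f k x y \<Longrightarrow> chain_of_length g C' \<delta> k (h x) (h y)"
    using chain_of_length_image[OF assms] by blast
  have "cycle_gcd g C' \<delta> dvd cycle_gcd f C \<delta>f"
    unfolding cycle_gcd_def[of f]
  proof (rule Gcd_greatest)
    fix l assume "l \<in> {k. \<exists>c. delta_chain_on f C \<delta>f c k \<and> c 0 = c k}"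
    then obtain x where "chain_of_length f C \<delta>f l x x" unfolding chain_of_length_def by auto
    then show "cycle_gcd g C' \<delta> dvd l" using cycle_gcd_dvd \<delta>f(2) by blast
  qed
  then have "cyc_rel g C' \<delta> (h x) (h y)" if "cyc_rel f C \<delta>f x y" for x y
    using that \<delta>f(2) h_image unfolding cyc_rel_iff by (meson dvd_trans image_eqI)
  then show ?thesis using that \<delta>f(1) by blast
qed

lemma lies_in_one_class_image:
  assumes "lies_in_one_class f C D" shows "lies_in_one_class g C' (h ` D)"
proof -
  obtain p where p: "p \<in> D" "\<forall>a\<in>D. cyc_rel_lim f C p a"
    using assms unfolding lies_in_one_class_def by blast
  have "cyc_rel g C' \<delta> (h p) (h a)" if "a \<in> D" "\<delta> > 0" for a \<delta>
  proof -
    obtain \<delta>f where "\<delta>f > 0" "\<And>x y. cyc_rel f C \<delta>f x y \<Longrightarrow> cyc_rel g C' \<delta> (h x) (h y)"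
      using cyc_rel_image[OF \<open>\<delta> > 0\<close>] by blast
    then show ?thesis using p(2) that(1) unfolding cyc_rel_lim_def by blast
  qed
  then show ?thesis using p(1) unfolding lies_in_one_class_def cyc_rel_lim_def by blast
qed

lemma class_at_image:
  assumes D: "lies_in_one_class f C D" and "\<delta> > 0"
  obtains \<delta>f where "\<delta>f > 0" "h ` class_at f C D \<delta>f \<subseteq> class_at g C' (h ` D) \<delta>"
proof -
  obtain \<delta>f where \<delta>f: "\<delta>f > 0" "\<And>x y. cyc_rel f C \<delta>f x y \<Longrightarrow> cyc_rel g C' \<delta> (h x) (h y)"
    using cyc_rel_image[OF \<open>\<delta> > 0\<close>] by blast
  obtain p where p: "p \<in> D" "\<forall>a\<in>D. cyc_rel f C \<delta>f p a" "class_at f C D \<delta>f = {y. cyc_rel f C \<delta>f p y}"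
    using X.lies_in_one_class_class_at[OF D \<delta>f(1)] by blast
  have "\<forall>b\<in>h ` D. cyc_rel g C' \<delta> (h p) b" using p(2) \<delta>f(2) by blast
  then have Eg: "class_at g C' (h ` D) \<delta> = {y. cyc_rel g C' \<delta> (h p) y}"
    by (rule Y.class_at_eq[OF \<open>\<delta> > 0\<close> imageI[OF p(1)]])
  have "h ` class_at f C D \<delta>f \<subseteq> class_at g C' (h ` D) \<delta>"
    unfolding p(3) Eg by (auto intro: \<delta>f(2))
  then show ?thesis by (rule that[OF \<delta>f(1)])
qed

lemma approaches_classes_image:
  assumes D: "lies_in_one_class f C D" and x: "x \<in> stable_set_class f C D"
    and c: "\<forall>i. c i \<in> C" "asymptotic (\<lambda>i. (f ^^ i) x) c"
  shows "approaches_classes g C' (h ` D) (\<lambda>i. h (c i))"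
  unfolding approaches_classes_def
proof (intro allI impI)
  fix \<delta> :: real assume "\<delta> > 0"
  obtain \<delta>f where \<delta>f: "\<delta>f > 0" "h ` class_at f C D \<delta>f \<subseteq> class_at g C' (h ` D) \<delta>"
    using class_at_image[OF D \<open>\<delta> > 0\<close>] by blast
  define Df where "Df = class_at f C D \<delta>f"
  have "D \<noteq> {}" using D by (auto simp: lies_in_one_class_def)
  then have sub: "(f ^^ i) ` Df \<subseteq> C" "(f ^^ i) ` Df \<noteq> {}" for i
    using X.class_at_bounds[OF D \<delta>f(1)] X.funpow_in_component unfolding Df_def by auto
  have "(\<lambda>i. infdist ((f ^^ i) x) ((f ^^ i) ` Df)) \<longlonglongrightarrow> 0"
    using x \<delta>f(1) unfolding X.stable_set_class_iff[OF D] approaches_classes_def Df_def by blast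
  then have "(\<lambda>i. infdist (c i) ((f ^^ i) ` Df)) \<longlonglongrightarrow> 0"
    using asymptotic_sym[OF c(2)] by (rule infdist_tendsto_asymptotic)
  then have "(\<lambda>i. infdist (h (c i)) (h ` (f ^^ i) ` Df)) \<longlonglongrightarrow> 0"
    using infdist_tendsto_image[OF h_uniformly_continuous, of c "\<lambda>i. (f ^^ i) ` Df"] c(1) sub
    by blast
  moreover have "h ` (f ^^ i) ` Df \<subseteq> (g ^^ i) ` class_at g C' (h ` D) \<delta>" for i
  proof
    fix z assume "z \<in> h ` (f ^^ i) ` Df"
    then obtain d where "d \<in> Df" "z = h ((f ^^ i) d)" by blast
    moreover have "d \<in> C" using \<open>d \<in> Df\<close> X.class_at_bounds(2)[OF D \<delta>f(1)] by (auto simp: Df_def)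
    ultimately show "z \<in> (g ^^ i) ` class_at g C' (h ` D) \<delta>"
      using h_funpow \<delta>f(2) unfolding Df_def by blast
  qed
  then have "infdist (h (c i)) ((g ^^ i) ` class_at g C' (h ` D) \<delta>) \<le> infdist (h (c i)) (h ` (f ^^ i) ` Df)"
    for i using sub(2) by (intro infdist_mono) auto
  ultimately show "(\<lambda>i. infdist (h (c i)) ((g ^^ i) ` class_at g C' (h ` D) \<delta>)) \<longlonglongrightarrow> 0"
    by (intro tendsto_zero_le[OF infdist_nonneg])
qed

lemma stable_set_class_transfer:
  assumes D: "lies_in_one_class f C D" and x: "x \<in> stable_set_class f C D"
  obtains c where "\<forall>i. c i \<in> C" "asymptotic (\<lambda>i. (f ^^ i) x) c"
    "asymptotic (\<lambda>i. g (h (c i))) (\<lambda>i. h (c (Suc i)))" "approaches_classes g C' (h ` D) (\<lambda>i. h (c i))"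
proof -
  have "x \<in> stable_set f C" using x zero_less_one unfolding stable_set_class_def by blast
  then have "(\<lambda>i. infdist ((f ^^ i) x) C) \<longlonglongrightarrow> 0" by (simp add: stable_set_def)
  then obtain c where c: "\<And>i. c i \<in> C" "asymptotic (\<lambda>i. (f ^^ i) x) c"
    using infdist_tendsto_zeroE[of "\<lambda>_. C", OF X.component_nonempty] by metis
  have "asymptotic (\<lambda>i. h (f (c i))) (\<lambda>i. h (c (Suc i)))"
    using asymptotic_uniformly_continuous[OF h_uniformly_continuous
        _ _ asymptotic_orbit_pseudo_orbit[OF X.uniformly_continuous c(2)]] c(1) X.map_in_component
    by blast
  then have "asymptotic (\<lambda>i. g (h (c i))) (\<lambda>i. h (c (Suc i)))" using conjugacy c(1) by simp
  moreover have "approaches_classes g C' (h ` D) (\<lambda>i. h (c i))"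
    using approaches_classes_image[OF D x] c by blast
  ultimately show ?thesis using that c by blast
qed

lemma scrambled_tuple_image:
  assumes shadowing: "s_limit_shadowing g" and D: "lies_in_one_class f C D"
    and F: "full_family F" and G: "full_family G" and "\<delta> > 0"
    and \<eta>: "\<eta> > 0" "\<forall>a\<in>C. \<forall>b\<in>C. dist (h a) (h b) < \<eta> \<longrightarrow> dist a b < \<delta>/2"
    and x: "\<forall>j<n. x j \<in> stable_set_class f C D" "scrambled F G f n \<delta> x"
    and w: "\<forall>j<n. w j \<in> stable_set_class g C' (h ` D)" and "\<epsilon> > 0"
  obtains y where "\<forall>j<n. y j \<in> stable_set_class g C' (h ` D)" "scrambled F G g n (\<eta>/2) y"
    "\<forall>j<n. dist (y j) (w j) < \<epsilon>"
proof -
  let ?V' = "stable_set_class g C' (h ` D)"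
  have D': "lies_in_one_class g C' (h ` D)" using lies_in_one_class_image[OF D] .
  have "\<exists>c y. (\<forall>i. c i \<in> C) \<and> asymptotic (\<lambda>i. (f ^^ i) (x j)) c \<and>
      asymptotic (\<lambda>i. (g ^^ i) y) (\<lambda>i. h (c i)) \<and> dist y (w j) < \<epsilon> \<and> y \<in> ?V'" if j: "j < n" for j
  proof -
    obtain c where c: "\<forall>i. c i \<in> C" "asymptotic (\<lambda>i. (f ^^ i) (x j)) c"
      and P: "asymptotic (\<lambda>i. g (h (c i))) (\<lambda>i. h (c (Suc i)))" "approaches_classes g C' (h ` D) (\<lambda>i. h (c i))"
      using stable_set_class_transfer[OF D x(1)[rule_format, OF j]] .
    obtain y where "dist y (w j) < \<epsilon>" "asymptotic (\<lambda>i. (g ^^ i) y) (\<lambda>i. h (c i))" "y \<in> ?V'"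
      using Y.shadow_into_stable_set_class[where P="\<lambda>i. h (c i)",
          OF shadowing D' w[rule_format, OF j] P \<open>\<epsilon> > 0\<close>] .
    then show ?thesis using c by blast
  qed
  then have "\<forall>j. \<exists>c y. j < n \<longrightarrow> (\<forall>i. c i \<in> C) \<and> asymptotic (\<lambda>i. (f ^^ i) (x j)) c \<and>
      asymptotic (\<lambda>i. (g ^^ i) y) (\<lambda>i. h (c i)) \<and> dist y (w j) < \<epsilon> \<and> y \<in> ?V'"
    by blast
  then obtain c y where cy: "\<And>j. j < n \<Longrightarrow> (\<forall>i. c j i \<in> C) \<and> asymptotic (\<lambda>i. (f ^^ i) (x j)) (c j) \<and>
      asymptotic (\<lambda>i. (g ^^ i) (y j)) (\<lambda>i. h (c j i)) \<and> dist (y j) (w j) < \<epsilon> \<and> y j \<in> ?V'"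
    by metis
  have cj: "\<forall>j<n. \<forall>i. c j i \<in> C" "\<forall>j<n. asymptotic (\<lambda>i. (f ^^ i) (x j)) (c j)"
    and yj: "\<forall>j<n. asymptotic (\<lambda>i. (g ^^ i) (y j)) (\<lambda>i. h (c j i))"
    using cy by blast+
  have "S_set g n y (\<eta>/2) \<in> F"
    using S_set_transfer[OF F _ \<eta>(2) \<eta>(1) \<open>\<delta> > 0\<close> cj yj] x(2) unfolding scrambled_def by blast
  moreover have "T_set g n y e \<in> G" if "e > 0" for e
    using T_set_transfer[OF G _ h_uniformly_continuous that cj yj] x(2) unfolding scrambled_def by blast
  ultimately have "scrambled F G g n (\<eta>/2) y" unfolding scrambled_def by blast
  moreover have "\<forall>j<n. y j \<in> ?V'" "\<forall>j<n. dist (y j) (w j) < \<epsilon>" using cy by blast+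
  ultimately show ?thesis using that by blast
qed

lemma dense_chaotic_image:
  assumes shadowing: "s_limit_shadowing g" and D: "lies_in_one_class f C D"
    and F: "full_family F" and G: "full_family G" and "\<delta> > 0"
    and chaotic: "dense_chaotic F G f n \<delta> (stable_set_class f C D)"
  shows "\<exists>\<delta>'>0. dense_chaotic F G g n \<delta>' (stable_set_class g C' (h ` D))"
proof -
  let ?V = "stable_set_class f C D" and ?V' = "stable_set_class g C' (h ` D)"
  \<comment> \<open>A single scrambled tuple of f suffices: density for g comes from shadowing.\<close>
  have "\<delta>/2 > 0" using \<open>\<delta> > 0\<close> by simp
  then obtain \<eta> where \<eta>: "\<eta> > 0" "\<forall>a\<in>C. \<forall>b\<in>C. dist (h a) (h b) < \<eta> \<longrightarrow> dist a b < \<delta>/2"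
    using h_inverse_modulus by blast
  obtain z where "z \<in> ?V" using chaotic unfolding dense_chaotic_def by blast
  moreover have dense: "\<forall>z. (\<forall>j<n. z j \<in> ?V) \<longrightarrow> (\<forall>\<epsilon>>0. \<exists>x. (\<forall>j<n. x j \<in> ?V) \<and>
      scrambled F G f n \<delta> x \<and> (\<forall>j<n. dist (x j) (z j) < \<epsilon>))"
    using chaotic unfolding dense_chaotic_def by blast
  ultimately have "\<forall>\<epsilon>>0. \<exists>x. (\<forall>j<n. x j \<in> ?V) \<and> scrambled F G f n \<delta> x \<and> (\<forall>j<n. dist (x j) z < \<epsilon>)"
    using spec[OF dense, of "\<lambda>_. z"] by simp
  then obtain x where x: "\<forall>j<n. x j \<in> ?V" "scrambled F G f n \<delta> x"
    using zero_less_one by blast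
  have D': "lies_in_one_class g C' (h ` D)" using lies_in_one_class_image[OF D] .
  obtain p where "p \<in> h ` D" using D' unfolding lies_in_one_class_def by blast
  then have "p \<in> ?V'" using Y.lies_in_one_class_subset_stable_set_class[OF D'] by (rule rev_subsetD)
  then have "?V' \<noteq> {}" by (metis empty_iff)
  moreover have "\<exists>y. (\<forall>j<n. y j \<in> ?V') \<and> scrambled F G g n (\<eta>/2) y \<and> (\<forall>j<n. dist (y j) (w j) < \<epsilon>)"
    if "\<forall>j<n. w j \<in> ?V'" "\<epsilon> > 0" for w \<epsilon>
    using scrambled_tuple_image[OF shadowing D F G \<open>\<delta> > 0\<close> \<eta> x that] by blast
  ultimately have "dense_chaotic F G g n (\<eta>/2) ?V'" unfolding dense_chaotic_def by blast
  then show ?thesis using \<eta>(1) by (intro exI[of _ "\<eta>/2"]) simp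
qed

end

theorem corollary1p1:
  fixes f :: "'a::metric_space \<Rightarrow> 'a" and g :: "'b::metric_space \<Rightarrow> 'b"
    and C D :: "'a set" and C' :: "'b set" and h :: "'a \<Rightarrow> 'b"
    and \<F> \<G> :: "nat set set" and n :: nat and \<delta> :: real
  assumes "compact (UNIV :: 'a set)" and "compact (UNIV :: 'b set)"
    and "continuous_on UNIV f" and "continuous_on UNIV g"
    and "C \<in> chain_components f" and "D \<in> cyc_classes_lim f C"
    and "C' \<in> chain_components g"
    and "\<exists>k. homeomorphism C C' h k"
    and "\<forall>x\<in>C. h (f x) = g (h x)"
    and "full_family \<F>" and "full_family \<G>"
    and "n \<ge> 2" and "\<delta> > 0"
    and "s_limit_shadowing g"
    and "dense_chaotic \<F> \<G> f n \<delta> (stable_set_class f C D)"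
  shows "\<exists>\<delta>'>0. dense_chaotic \<F> \<G> g n \<delta>' (stable_set_class g C' (h ` D))"
proof -
  obtain k where "homeomorphism C C' h k" using assms(8) by blast
  then interpret conjugate_chain_components f C g C' h k
    using assms(1-7,9) by unfold_locales
  show ?thesis
    using dense_chaotic_image[OF assms(14) X.cyc_classes_lim_lies_in_one_class[OF assms(6)]
        assms(10,11,13,15)] .
qed

end
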